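(* Let $T$ be a c.n.u. contraction on $H$ and suppose $t:=T|_{\mathbb{K}^\perp}\in\mathbb{B}(\mathbb{K}^\perp,\mathbb{K}_*^\perp)$ satisfies $\|t\|<1$. Define $\Gamma'_\pm$ on $A_T^{\perp_s}$ by $$\Gamma'_+=(I-t^*t)^{-1/2}\Gamma_+-t^*(I-tt^* )^{-1/2}\Gamma_-,\qquad \Gamma'_-=t(I-t^*t)^{-1/2}\Gamma_+-(I-tt^* )^{-1/2}\Gamma_-.$$ Then the contractive Weyl function with respect to $(\mathbb{K}^\perp,\mathbb{K}_*^\perp,\Gamma'_+,\Gamma'_-)$ is $B'(\lambda)=-\Theta_T(\lambda)$; that is, for every $\lambda\in\mathbb{D}$ and every $a\in N_\lambda=\{(x,\lambda x):x\in H\}\cap A_T^{\perp_s}$, $$\Gamma'_-a=\big(T-\lambda\mathfrak{D}_*(I-\lambda T^* )^{-1}\mathfrak{D}\big)\big|_{\mathbb{K}^\perp}\,\Gamma'_+a.$$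
   Context: $H$ is an infinite-dimensional separable complex Hilbert space; $T\in\mathbb{B}(H)$, $\|T\|\le1$, is completely non-unitary (no nonzero invariant subspace on which $T$ is unitary). $\mathbb{K}=\ker(I-T^*T)$, $\mathbb{K}_*=\ker(I-TT^* )$; $T$ maps $\mathbb{K}^\perp$ into $\mathbb{K}_*^\perp$. $\mathfrak{D}=(I-T^*T)^{1/2}$, $\mathfrak{D}_*=(I-TT^* )^{1/2}$, and the Sz.-Nagy–Foias characteristic function is $\Theta_T(\lambda)=(-T+\lambda\mathfrak{D}_*(I-\lambda T^* )^{-1}\mathfrak{D})|_{\mathbb{K}^\perp}$, $\lambda\in\mathbb{D}$ (open unit disc). $\mathbb{H}=H\oplus_\perp H$ with $[(x_1,x_2),(y_1,y_2)]=i(x_1,y_1)_H-i(x_2,y_2)_H$; $S^{\perp_s}=\{a:[a,b]=0\ \forall b\in S\}$; $A_T=\{(x,Tx):x\in\mathbb{K}\}$. Every $a\in A_T^{\perp_s}$ decomposes uniquely as $a=(x_0,Tx_0)+(a_+,0)+(0,a_-)$ with $x_0\in\mathbb{K}$, $a_+\in\mathbb{K}^\perp$, $a_-\in\mathbb{K}_*^\perp$; the canonical boundary maps are $\Gamma_+a=a_+$, $\Gamma_-a=a_-$. *)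

theory Defs
  imports Complex_Main "HOL-Library.Function_Algebras"
begin

text \<open>The separable infinite-dimensional complex Hilbert space H is realised
  concretely as ell^2(nat): square-summable complex sequences.\<close>

type_synonym vec = "nat \<Rightarrow> complex"

definition l2 :: "vec set" where
  "l2 = {x. summable (\<lambda>n. (cmod (x n))^2)}"

definition cinner :: "vec \<Rightarrow> vec \<Rightarrow> complex" where
  "cinner x y = (\<Sum>n. x n * cnj (y n))"

definition l2norm :: "vec \<Rightarrow> real" where
  "l2norm x = sqrt (\<Sum>n. (cmod (x n))^2)"

definition smul :: "complex \<Rightarrow> vec \<Rightarrow> vec" where
  "smul c x = (\<lambda>n. c * x n)"

definition closed_subspace :: "vec set \<Rightarrow> bool" where
  "closed_subspace M \<longleftrightarrow> M \<subseteq> l2 \<and> 0 \<in> M \<and> (\<forall>x\<in>M. \<forall>y\<in>M. x + y \<in> M)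
     \<and> (\<forall>c. \<forall>x\<in>M. smul c x \<in> M)
     \<and> (\<forall>X x. (\<forall>k. X k \<in> M) \<and> x \<in> l2 \<and> (\<lambda>k. l2norm (X k - x)) \<longlonglongrightarrow> 0 \<longrightarrow> x \<in> M)"

definition orth :: "vec set \<Rightarrow> vec set" where
  "orth S = {y \<in> l2. \<forall>x\<in>S. cinner x y = 0}"

definition bounded_op :: "vec set \<Rightarrow> vec set \<Rightarrow> (vec \<Rightarrow> vec) \<Rightarrow> bool" where
  "bounded_op M N T \<longleftrightarrow> (\<forall>x\<in>M. T x \<in> N)
     \<and> (\<forall>x\<in>M. \<forall>y\<in>M. T (x + y) = T x + T y)
     \<and> (\<forall>c. \<forall>x\<in>M. T (smul c x) = smul c (T x))
     \<and> (\<exists>C. \<forall>x\<in>M. l2norm (T x) \<le> C * l2norm x)"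

definition op_norm_on :: "vec set \<Rightarrow> (vec \<Rightarrow> vec) \<Rightarrow> real" where
  "op_norm_on M T = Sup {l2norm (T x) | x. x \<in> M \<and> l2norm x \<le> 1}"

definition adj_on :: "vec set \<Rightarrow> vec set \<Rightarrow> (vec \<Rightarrow> vec) \<Rightarrow> (vec \<Rightarrow> vec)" where
  "adj_on M N T = (\<lambda>y. if y \<in> N then (THE z. z \<in> M \<and> (\<forall>x\<in>M. cinner (T x) y = cinner x z)) else 0)"

abbreviation adj :: "(vec \<Rightarrow> vec) \<Rightarrow> (vec \<Rightarrow> vec)" where
  "adj T \<equiv> adj_on l2 l2 T"

definition op_sqrt_on :: "vec set \<Rightarrow> (vec \<Rightarrow> vec) \<Rightarrow> (vec \<Rightarrow> vec)" where
  "op_sqrt_on M A = (THE S. bounded_op M M S \<and> (\<forall>x. x \<notin> M \<longrightarrow> S x = 0)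
     \<and> (\<forall>x\<in>M. \<forall>y\<in>M. cinner (S x) y = cinner x (S y))
     \<and> (\<forall>x\<in>M. Im (cinner (S x) x) = 0 \<and> 0 \<le> Re (cinner (S x) x))
     \<and> (\<forall>x\<in>M. S (S x) = A x))"

definition op_inv_on :: "vec set \<Rightarrow> (vec \<Rightarrow> vec) \<Rightarrow> (vec \<Rightarrow> vec)" where
  "op_inv_on M A = (\<lambda>y. if y \<in> M then (THE x. x \<in> M \<and> A x = y) else 0)"

definition defect :: "(vec \<Rightarrow> vec) \<Rightarrow> (vec \<Rightarrow> vec)" where
  "defect T = op_sqrt_on l2 (\<lambda>x. x - adj T (T x))"

definition defect_star :: "(vec \<Rightarrow> vec) \<Rightarrow> (vec \<Rightarrow> vec)" where
  "defect_star T = op_sqrt_on l2 (\<lambda>x. x - T (adj T x))"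

definition Kset :: "(vec \<Rightarrow> vec) \<Rightarrow> vec set" where
  "Kset T = {x \<in> l2. x - adj T (T x) = 0}"

definition Kstar :: "(vec \<Rightarrow> vec) \<Rightarrow> vec set" where
  "Kstar T = {x \<in> l2. x - T (adj T x) = 0}"

definition char_fun :: "(vec \<Rightarrow> vec) \<Rightarrow> complex \<Rightarrow> (vec \<Rightarrow> vec)" where
  "char_fun T l = (\<lambda>x. if x \<in> orth (Kset T) then
      - T x + smul l (defect_star T (op_inv_on l2 (\<lambda>y. y - smul l (adj T y)) (defect T x)))
    else 0)"

definition cnu :: "(vec \<Rightarrow> vec) \<Rightarrow> bool" where
  "cnu T \<longleftrightarrow> \<not> (\<exists>M. closed_subspace M \<and> M \<noteq> {0} \<and> T ` M = M
                  \<and> (\<forall>x\<in>M. l2norm (T x) = l2norm x))"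

definition krein_form :: "vec \<times> vec \<Rightarrow> vec \<times> vec \<Rightarrow> complex" where
  "krein_form a b = \<i> * cinner (fst a) (fst b) - \<i> * cinner (snd a) (snd b)"

definition s_orth :: "(vec \<times> vec) set \<Rightarrow> (vec \<times> vec) set" where
  "s_orth S = {a. fst a \<in> l2 \<and> snd a \<in> l2 \<and> (\<forall>b\<in>S. krein_form a b = 0)}"

definition A_T :: "(vec \<Rightarrow> vec) \<Rightarrow> (vec \<times> vec) set" where
  "A_T T = {(x, T x) | x. x \<in> Kset T}"

definition Gamma_plus :: "(vec \<Rightarrow> vec) \<Rightarrow> vec \<times> vec \<Rightarrow> vec" where
  "Gamma_plus T a = (THE p. p \<in> orth (Kset T) \<and>
      (\<exists>x0\<in>Kset T. \<exists>m\<in>orth (Kstar T). a = (x0 + p, T x0 + m)))"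

definition Gamma_minus :: "(vec \<Rightarrow> vec) \<Rightarrow> vec \<times> vec \<Rightarrow> vec" where
  "Gamma_minus T a = (THE m. m \<in> orth (Kstar T) \<and>
      (\<exists>x0\<in>Kset T. \<exists>p\<in>orth (Kset T). a = (x0 + p, T x0 + m)))"

definition N_lambda :: "(vec \<Rightarrow> vec) \<Rightarrow> complex \<Rightarrow> (vec \<times> vec) set" where
  "N_lambda T l = {(x, smul l x) | x. x \<in> l2} \<inter> s_orth (A_T T)"

text \<open>t = T restricted to K-perp, t* its adjoint K*-perp \<rightarrow> K-perp.\<close>
definition t_star :: "(vec \<Rightarrow> vec) \<Rightarrow> (vec \<Rightarrow> vec)" where
  "t_star T = adj_on (orth (Kset T)) (orth (Kstar T)) T"

definition R1 :: "(vec \<Rightarrow> vec) \<Rightarrow> (vec \<Rightarrow> vec)" where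
  "R1 T = op_inv_on (orth (Kset T)) (op_sqrt_on (orth (Kset T)) (\<lambda>x. x - t_star T (T x)))"

definition R2 :: "(vec \<Rightarrow> vec) \<Rightarrow> (vec \<Rightarrow> vec)" where
  "R2 T = op_inv_on (orth (Kstar T)) (op_sqrt_on (orth (Kstar T)) (\<lambda>y. y - T (t_star T y)))"

definition Gamma'_plus :: "(vec \<Rightarrow> vec) \<Rightarrow> vec \<times> vec \<Rightarrow> vec" where
  "Gamma'_plus T a = R1 T (Gamma_plus T a) - t_star T (R2 T (Gamma_minus T a))"

definition Gamma'_minus :: "(vec \<Rightarrow> vec) \<Rightarrow> vec \<times> vec \<Rightarrow> vec" where
  "Gamma'_minus T a = T (R1 T (Gamma_plus T a)) - R2 T (Gamma_minus T a)"

end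

theory Submission
  imports Defs "HOL-Analysis.Infinite_Sum" "HOL-Analysis.L2_Norm" "HOL-Computational_Algebra.Formal_Power_Series"
begin

text \<open>
  Let \<open>a = (x, \<lambda>x) \<in> N\<^sub>\<lambda>\<close>. The defect operator \<open>D\<close> vanishes on \<open>K\<close>, maps into \<open>K\<^sup>\<bottom>\<close> and
  agrees there with \<open>S\<^sub>1 = (I - t\<^sup>*t)\<^sup>1\<^sup>/\<^sup>2\<close>, which is invertible because \<open>\<parallel>t\<parallel> < 1\<close>. Hence
  \<open>p = S\<^sub>1\<^sup>-\<^sup>1 D x\<close> is the \<open>K\<^sup>\<bottom>\<close>-component of \<open>x\<close>, and Krein orthogonality of \<open>a\<close> to \<open>A\<^sub>T\<close> says
  exactly that \<open>m = \<lambda>x - T(x - p)\<close> lies in \<open>K\<^sub>*\<^sup>\<bottom>\<close>; so \<open>\<Gamma>\<^sub>+a = p\<close>, \<open>\<Gamma>\<^sub>-a = m\<close>. With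
  \<open>r = S\<^sub>1\<^sup>-\<^sup>1 p\<close>, \<open>u = S\<^sub>2\<^sup>-\<^sup>1 m\<close> we get \<open>\<Gamma>'\<^sub>+a = r - t\<^sup>*u\<close> and \<open>\<Gamma>'\<^sub>-a = T r - u\<close>. The
  intertwining \<open>S\<^sub>1 t\<^sup>* = t\<^sup>* S\<^sub>2\<close> gives \<open>D \<Gamma>'\<^sub>+a = p - T\<^sup>*m = (I - \<lambda>T\<^sup>*) x\<close>, so the
  resolvent in \<open>\<Theta>\<^sub>T(\<lambda>)\<close> returns \<open>x\<close> and \<open>\<Theta>\<^sub>T(\<lambda>) \<Gamma>'\<^sub>+a = -T \<Gamma>'\<^sub>+a + D\<^sub>*(\<lambda>x) =
  -T \<Gamma>'\<^sub>+a + S\<^sub>2\<^sup>2 u = -T r + T T\<^sup>*u + u - T T\<^sup>*u = -\<Gamma>'\<^sub>-a\<close>.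

  The square roots are the binomial series \<open>\<Sum> (1/2 choose n) (-B)\<^sup>n\<close> of self-adjoint
  contractions \<open>B\<close>, shown to be the unique positive square roots; the inverses come
  from Neumann series.
\<close>

section \<open>Square-summable sequences\<close>

lemma l2_iff: "x \<in> l2 \<longleftrightarrow> summable (\<lambda>n. (cmod (x n))^2)"
  by (simp add: l2_def)

lemma l2_zero[simp]: "(0::vec) \<in> l2"
  by (simp add: l2_def)

lemma cmod_add_power2_le: "(cmod (a + b))^2 \<le> 2 * (cmod a)^2 + 2 * (cmod b)^2"
proof -
  have "cmod (a + b) \<le> cmod a + cmod b" by (rule norm_triangle_ineq)
  hence "(cmod (a + b))^2 \<le> (cmod a + cmod b)^2"
    by (simp add: power_mono)
  also have "\<dots> \<le> 2 * (cmod a)^2 + 2 * (cmod b)^2"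
    using zero_le_power2[of "cmod a - cmod b"] unfolding power2_sum power2_diff by linarith
  finally show ?thesis .
qed

lemma l2_add[simp]: "x \<in> l2 \<Longrightarrow> y \<in> l2 \<Longrightarrow> x + y \<in> l2"
  unfolding l2_def
proof clarsimp
  assume a: "summable (\<lambda>n. (cmod (x n))\<^sup>2)" "summable (\<lambda>n. (cmod (y n))\<^sup>2)"
  show "summable (\<lambda>n. (cmod (x n + y n))\<^sup>2)"
    by (rule summable_comparison_test'[where g="\<lambda>n. 2 * (cmod (x n))^2 + 2 * (cmod (y n))^2"])
       (use a cmod_add_power2_le in \<open>auto intro: summable_add summable_mult\<close>)
qed

lemma l2_smul[simp]: "x \<in> l2 \<Longrightarrow> smul c x \<in> l2"
  unfolding l2_def smul_def by (simp add: norm_mult power_mult_distrib summable_mult)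

lemma l2_uminus[simp]: "x \<in> l2 \<Longrightarrow> - x \<in> l2"
  unfolding l2_def by simp

lemma l2_diff[simp]: "x \<in> l2 \<Longrightarrow> y \<in> l2 \<Longrightarrow> x - y \<in> l2"
  using l2_add[of x "-y"] by simp

lemma l2_sum[simp]: "(\<And>i. i \<in> A \<Longrightarrow> f i \<in> l2) \<Longrightarrow> (\<lambda>k. \<Sum>i\<in>A. f i k) \<in> l2"
proof (induction A rule: infinite_finite_induct)
  case (infinite A) then show ?case by (simp add: zero_fun_def[symmetric])
next
  case empty then show ?case by (simp add: zero_fun_def[symmetric])
next
  case (insert a A)
  have "(\<lambda>k. \<Sum>i\<in>insert a A. f i k) = f a + (\<lambda>k. \<Sum>i\<in>A. f i k)"
    using insert by auto
  then show ?case using insert by simp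
qed

lemma smul_minus1: "smul (-1) x = - x"
  by (auto simp: smul_def)

lemma smul_0_left[simp]: "smul 0 x = 0"
  by (simp add: smul_def zero_fun_def)

lemma smul_0_right[simp]: "smul c 0 = 0"
  by (simp add: smul_def zero_fun_def)

lemma smul_diff: "smul c (x - y) = smul c x - smul c y"
  by (auto simp: smul_def algebra_simps)

lemma smul_apply[simp]: "smul c x k = c * x k"
  by (simp add: smul_def)

lemma cmod_mult_cnj_le: "cmod (a * cnj b) \<le> ((cmod a)^2 + (cmod b)^2) / 2"
proof -
  have "cmod (a * cnj b) = cmod a * cmod b" by (simp add: norm_mult)
  also have "\<dots> \<le> ((cmod a)^2 + (cmod b)^2) / 2"
    using sum_squares_bound[of "cmod a" "cmod b"] by (simp add: power2_eq_square)
  finally show ?thesis .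
qed

lemma summable_norm_cinner:
  assumes "x \<in> l2" "y \<in> l2" shows "summable (\<lambda>n. cmod (x n * cnj (y n)))"
  by (rule summable_comparison_test'[where g="\<lambda>n. ((cmod (x n))^2 + (cmod (y n))^2) / 2"])
     (use assms cmod_mult_cnj_le in \<open>auto simp: l2_def intro: summable_add summable_divide\<close>)

lemma summable_cinner:
  assumes "x \<in> l2" "y \<in> l2" shows "summable (\<lambda>n. x n * cnj (y n))"
  by (rule summable_norm_cancel[OF summable_norm_cinner[OF assms]])

lemma cinner_sums: "x \<in> l2 \<Longrightarrow> y \<in> l2 \<Longrightarrow> (\<lambda>n. x n * cnj (y n)) sums cinner x y"
  unfolding cinner_def by (rule summable_sums[OF summable_cinner])

lemma cinner_add_left: "x \<in> l2 \<Longrightarrow> y \<in> l2 \<Longrightarrow> z \<in> l2 \<Longrightarrow> cinner (x + y) z = cinner x z + cinner y z"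
  unfolding cinner_def
  by (simp add: distrib_right suminf_add[OF summable_cinner summable_cinner])

lemma cinner_smul_left: "x \<in> l2 \<Longrightarrow> y \<in> l2 \<Longrightarrow> cinner (smul c x) y = c * cinner x y"
  unfolding cinner_def smul_def
  by (simp add: mult.assoc suminf_mult[OF summable_cinner])

lemma cinner_commute: "x \<in> l2 \<Longrightarrow> y \<in> l2 \<Longrightarrow> cinner y x = cnj (cinner x y)"
proof -
  assume a: "x \<in> l2" "y \<in> l2"
  have "(\<lambda>n. cnj (x n * cnj (y n))) sums cnj (cinner x y)"
    using cinner_sums[OF a] by (simp only: sums_cnj)
  hence "(\<lambda>n. y n * cnj (x n)) sums cnj (cinner x y)" by (simp add: mult.commute)
  thus ?thesis using sums_unique2[OF cinner_sums[OF a(2,1)]] by simp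
qed

lemma cinner_add_right: "x \<in> l2 \<Longrightarrow> y \<in> l2 \<Longrightarrow> z \<in> l2 \<Longrightarrow> cinner z (x + y) = cinner z x + cinner z y"
  by (simp add: cinner_commute[of _ z] cinner_add_left)

lemma cinner_smul_right: "x \<in> l2 \<Longrightarrow> y \<in> l2 \<Longrightarrow> cinner y (smul c x) = cnj c * cinner y x"
  by (simp add: cinner_commute[of _ y] cinner_smul_left)

lemma cinner_minus_left: "x \<in> l2 \<Longrightarrow> y \<in> l2 \<Longrightarrow> cinner (- x) y = - cinner x y"
  using cinner_smul_left[of x y "-1"] by (simp add: smul_minus1)

lemma cinner_minus_right: "x \<in> l2 \<Longrightarrow> y \<in> l2 \<Longrightarrow> cinner y (- x) = - cinner y x"
  using cinner_smul_right[of x y "-1"] by (simp add: smul_minus1)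

lemma cinner_diff_left: "x \<in> l2 \<Longrightarrow> y \<in> l2 \<Longrightarrow> z \<in> l2 \<Longrightarrow> cinner (x - y) z = cinner x z - cinner y z"
  using cinner_add_left[of x "-y" z] by (simp add: cinner_minus_left)

lemma cinner_diff_right: "x \<in> l2 \<Longrightarrow> y \<in> l2 \<Longrightarrow> z \<in> l2 \<Longrightarrow> cinner z (x - y) = cinner z x - cinner z y"
  using cinner_add_right[of x "-y" z] by (simp add: cinner_minus_right)

lemma cinner_zero_left[simp]: "cinner 0 y = 0"
  by (simp add: cinner_def)

lemma cinner_zero_right[simp]: "cinner y 0 = 0"
  by (simp add: cinner_def)

lemma l2norm_power2: "x \<in> l2 \<Longrightarrow> (l2norm x)^2 = (\<Sum>n. (cmod (x n))^2)"
proof -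
  assume "x \<in> l2"
  hence "0 \<le> (\<Sum>n. (cmod (x n))^2)" by (intro suminf_nonneg) (auto simp: l2_def)
  thus ?thesis unfolding l2norm_def by simp
qed

lemma l2norm_nonneg[simp]: "x \<in> l2 \<Longrightarrow> 0 \<le> l2norm x"
  using l2norm_power2[of x] by (metis l2norm_def real_sqrt_ge_zero suminf_nonneg zero_le_power2 l2_iff)

lemma cinner_self: "x \<in> l2 \<Longrightarrow> cinner x x = complex_of_real ((l2norm x)^2)"
proof -
  assume a: "x \<in> l2"
  have "(\<lambda>n. x n * cnj (x n)) = (\<lambda>n. complex_of_real ((cmod (x n))^2))"
    by (simp add: complex_mult_cnj cmod_def)
  hence "cinner x x = (\<Sum>n. complex_of_real ((cmod (x n))^2))" by (simp add: cinner_def)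
  also have "\<dots> = complex_of_real (\<Sum>n. (cmod (x n))^2)"
    using a by (simp add: l2_def suminf_of_real)
  finally show ?thesis using l2norm_power2[OF a] by simp
qed

lemma l2norm_eq_zero_iff: "x \<in> l2 \<Longrightarrow> l2norm x = 0 \<longleftrightarrow> x = 0"
proof -
  assume a: "x \<in> l2"
  have "l2norm x = 0 \<longleftrightarrow> (\<Sum>n. (cmod (x n))^2) = 0"
    using l2norm_power2[OF a] by (metis l2norm_def real_sqrt_zero zero_power2 power_zero_numeral)
  also have "\<dots> \<longleftrightarrow> (\<forall>n. (cmod (x n))^2 = 0)"
    using a by (intro suminf_eq_zero_iff) (auto simp: l2_def)
  also have "\<dots> \<longleftrightarrow> x = 0" by (auto simp: fun_eq_iff)
  finally show ?thesis .
qed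

lemma l2norm_le_mult_imp_zero:
  assumes x: "x \<in> l2" and q: "q < 1" and le: "l2norm x \<le> q * l2norm x"
  shows "x = 0"
proof -
  have "l2norm x = 0" using le q l2norm_nonneg[OF x]
    by (metis mult_le_cancel_right1 not_less order_antisym)
  thus ?thesis using l2norm_eq_zero_iff[OF x] by simp
qed

lemma l2norm_zero[simp]: "l2norm 0 = 0"
  by (simp add: l2norm_def)

lemma coord_le_l2norm: "x \<in> l2 \<Longrightarrow> cmod (x k) \<le> l2norm x"
proof -
  assume a: "x \<in> l2"
  have "(cmod (x k))^2 \<le> (\<Sum>n. (cmod (x n))^2)"
    using sum_le_suminf[of "\<lambda>n. (cmod (x n))^2" "{k}"] a by (auto simp: l2_def)
  thus ?thesis unfolding l2norm_def by (simp add: real_le_rsqrt)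
qed

lemma L2_set_le_l2norm: "x \<in> l2 \<Longrightarrow> L2_set (\<lambda>k. cmod (x k)) {..<K} \<le> l2norm x"
  unfolding L2_set_def l2norm_def
  using sum_le_suminf[of "\<lambda>n. (cmod (x n))^2" "{..<K}"] by (auto simp: l2_def)

lemma cmod_cinner_le_suminf: "x \<in> l2 \<Longrightarrow> y \<in> l2 \<Longrightarrow> cmod (cinner x y) \<le> (\<Sum>n. cmod (x n) * cmod (y n))"
  unfolding cinner_def
  using summable_norm[OF summable_norm_cinner] by (simp add: norm_mult)

lemma suminf_cmod_mult_le:
  assumes "x \<in> l2" "y \<in> l2"
  shows "(\<Sum>n. cmod (x n) * cmod (y n)) \<le> l2norm x * l2norm y"
proof (rule suminf_le_const)
  show "summable (\<lambda>n. cmod (x n) * cmod (y n))"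
    using summable_norm_cinner[OF assms] by (simp add: norm_mult)
  fix N
  have "(\<Sum>n<N. cmod (x n) * cmod (y n)) = (\<Sum>n<N. \<bar>cmod (x n)\<bar> * \<bar>cmod (y n)\<bar>)" by simp
  also have "\<dots> \<le> L2_set (\<lambda>n. cmod (x n)) {..<N} * L2_set (\<lambda>n. cmod (y n)) {..<N}"
    by (rule L2_set_mult_ineq)
  also have "\<dots> \<le> l2norm x * l2norm y"
    by (rule mult_mono) (use assms L2_set_le_l2norm in auto)
  finally show "(\<Sum>n<N. cmod (x n) * cmod (y n)) \<le> l2norm x * l2norm y" .
qed

lemma cinner_Cauchy_Schwarz: "x \<in> l2 \<Longrightarrow> y \<in> l2 \<Longrightarrow> cmod (cinner x y) \<le> l2norm x * l2norm y"
  using cmod_cinner_le_suminf suminf_cmod_mult_le order_trans by blast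

lemma l2norm_power2_cinner: "x \<in> l2 \<Longrightarrow> (l2norm x)^2 = Re (cinner x x)"
  by (simp add: cinner_self)

lemma l2norm_smul: "x \<in> l2 \<Longrightarrow> l2norm (smul c x) = cmod c * l2norm x"
proof -
  assume a: "x \<in> l2"
  have "(\<Sum>n. (cmod (c * x n))^2) = (cmod c)^2 * (\<Sum>n. (cmod (x n))^2)"
    using a by (simp add: norm_mult power_mult_distrib suminf_mult l2_def)
  thus ?thesis unfolding l2norm_def smul_def by (simp add: real_sqrt_mult)
qed

lemma l2norm_uminus: "l2norm (- x) = l2norm x"
  by (simp add: l2norm_def)

lemma l2norm_minus_commute: "l2norm (x - y) = l2norm (y - x)"
  by (metis l2norm_uminus minus_diff_eq)

lemma cinner_self_eq_zero: "x \<in> l2 \<Longrightarrow> cinner x x = 0 \<Longrightarrow> x = 0"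
  by (metis cinner_self l2norm_eq_zero_iff of_real_eq_0_iff zero_eq_power2)

section \<open>Series of vectors and closed subspaces\<close>

definition vsum :: "(nat \<Rightarrow> nat \<Rightarrow> complex) \<Rightarrow> nat \<Rightarrow> nat \<Rightarrow> complex" where
  "vsum v N = (\<lambda>k. \<Sum>n<N. v n k)"

definition vsuminf :: "(nat \<Rightarrow> nat \<Rightarrow> complex) \<Rightarrow> nat \<Rightarrow> complex" where
  "vsuminf v = (\<lambda>k. \<Sum>n. v n k)"

lemma l2_vsum: "(\<And>n. v n \<in> l2) \<Longrightarrow> vsum v N \<in> l2"
  unfolding vsum_def by (rule l2_sum) auto

lemma vsum_Suc: "vsum v (Suc N) = vsum v N + v N"
  by (auto simp: vsum_def)

lemma vsum_0[simp]: "vsum v 0 = 0"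
  by (auto simp: vsum_def)

lemma summable_coord:
  assumes "\<And>n. v n \<in> l2" "summable (\<lambda>n. l2norm (v n))"
  shows "summable (\<lambda>n. norm (v n k))"
  by (rule summable_comparison_test'[OF assms(2)]) (use assms coord_le_l2norm in auto)

lemma L2_set_vsum_le:
  fixes v :: "nat \<Rightarrow> nat \<Rightarrow> complex"
  shows "L2_set (\<lambda>k. cmod (\<Sum>n<M. v n k)) A \<le> (\<Sum>n<M. L2_set (\<lambda>k. cmod (v n k)) A)"
proof (induction M)
  case 0 then show ?case by (simp add: L2_set_def)
next
  case (Suc M)
  have "L2_set (\<lambda>k. cmod (\<Sum>n<Suc M. v n k)) A \<le> L2_set (\<lambda>k. cmod (\<Sum>n<M. v n k) + cmod (v M k)) A"
    by (rule L2_set_mono) (auto intro: norm_triangle_ineq)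
  also have "\<dots> \<le> L2_set (\<lambda>k. cmod (\<Sum>n<M. v n k)) A + L2_set (\<lambda>k. cmod (v M k)) A"
    by (rule L2_set_triangle_ineq)
  also have "\<dots> \<le> (\<Sum>n<Suc M. L2_set (\<lambda>k. cmod (v n k)) A)"
    using Suc by simp
  finally show ?case .
qed

lemma vsuminf_norm_bound:
  assumes v: "\<And>n. v n \<in> l2" and s: "summable (\<lambda>n. l2norm (v n))"
  shows "vsuminf v \<in> l2" "l2norm (vsuminf v) \<le> (\<Sum>n. l2norm (v n))"
proof -
  define B where "B = (\<Sum>n. l2norm (v n))"
  have B0: "0 \<le> B" unfolding B_def using v s by (auto intro: suminf_nonneg)
  have cs: "\<And>k. summable (\<lambda>n. v n k)"
    by (rule summable_norm_cancel[OF summable_coord[OF v s]])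
  have L2K: "L2_set (\<lambda>k. cmod (vsuminf v k)) {..<K} \<le> B" for K
  proof -
    have lim: "(\<lambda>M. L2_set (\<lambda>k. cmod (\<Sum>n<M. v n k)) {..<K}) \<longlonglongrightarrow> L2_set (\<lambda>k. cmod (vsuminf v k)) {..<K}"
      unfolding L2_set_def vsuminf_def
      by (intro tendsto_intros summable_LIMSEQ cs)
    have "L2_set (\<lambda>k. cmod (\<Sum>n<M. v n k)) {..<K} \<le> B" for M
    proof -
      have "L2_set (\<lambda>k. cmod (\<Sum>n<M. v n k)) {..<K} \<le> (\<Sum>n<M. L2_set (\<lambda>k. cmod (v n k)) {..<K})"
        by (rule L2_set_vsum_le)
      also have "\<dots> \<le> (\<Sum>n<M. l2norm (v n))"
        by (intro sum_mono L2_set_le_l2norm v)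
      also have "\<dots> \<le> B" unfolding B_def using v s by (intro sum_le_suminf) auto
      finally show ?thesis .
    qed
    thus ?thesis by (intro LIMSEQ_le_const2[OF lim]) auto
  qed
  have sq: "(\<Sum>k<K. (cmod (vsuminf v k))^2) \<le> B^2" for K
  proof -
    have "sqrt (\<Sum>k<K. (cmod (vsuminf v k))^2) \<le> B" using L2K[of K] by (simp add: L2_set_def)
    moreover have "0 \<le> (\<Sum>k<K. (cmod (vsuminf v k))^2)" by (rule sum_nonneg) simp
    ultimately show ?thesis using power_mono[of "sqrt (\<Sum>k<K. (cmod (vsuminf v k))^2)" B 2] by simp
  qed
  have summ: "summable (\<lambda>k. (cmod (vsuminf v k))^2)"
    by (rule summableI_nonneg_bounded[where x="B^2"]) (use sq in auto)
  thus "vsuminf v \<in> l2" by (simp add: l2_def)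
  have "(\<Sum>k. (cmod (vsuminf v k))^2) \<le> B^2"
    by (rule suminf_le_const[OF summ sq])
  hence "l2norm (vsuminf v) \<le> sqrt (B^2)" unfolding l2norm_def by (rule real_sqrt_le_mono)
  hence "l2norm (vsuminf v) \<le> B" using B0 by simp
  thus "l2norm (vsuminf v) \<le> (\<Sum>n. l2norm (v n))" unfolding B_def .
qed

lemma vsuminf_minus_vsum:
  assumes v: "\<And>n. v n \<in> l2" and s: "summable (\<lambda>n. l2norm (v n))"
  shows "vsuminf v - vsum v N = vsuminf (\<lambda>n. v (n + N))"
proof -
  have cs: "\<And>k. summable (\<lambda>n. v n k)"
    by (rule summable_norm_cancel[OF summable_coord[OF v s]])
  show ?thesis
  proof (rule ext)
    fix k
    have "(\<Sum>n. v n k) = (\<Sum>n. v (n + N) k) + (\<Sum>i<N. v i k)"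
      by (rule suminf_split_initial_segment[OF cs])
    thus "(vsuminf v - vsum v N) k = vsuminf (\<lambda>n. v (n + N)) k" by (simp add: vsuminf_def vsum_def)
  qed
qed

lemma vsum_tendsto_vsuminf:
  assumes v: "\<And>n. v n \<in> l2" and s: "summable (\<lambda>n. l2norm (v n))"
  shows "(\<lambda>N. l2norm (vsuminf v - vsum v N)) \<longlonglongrightarrow> 0"
proof (rule tendsto_sandwich[where f="\<lambda>_. 0" and h="\<lambda>N. (\<Sum>n. l2norm (v (n + N)))"])
  have sN: "summable (\<lambda>n. l2norm (v (n + N)))" for N
    using s summable_iff_shift[where f="\<lambda>m. l2norm (v m)" and k=N] by simp
  show "\<forall>\<^sub>F N in sequentially. 0 \<le> l2norm (vsuminf v - vsum v N)"
    by (rule always_eventually) (use v s vsuminf_norm_bound(1)[OF v s] l2_vsum[OF v] in auto)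
  show "\<forall>\<^sub>F N in sequentially. l2norm (vsuminf v - vsum v N) \<le> (\<Sum>n. l2norm (v (n + N)))"
    unfolding vsuminf_minus_vsum[OF v s] by (rule always_eventually, intro allI vsuminf_norm_bound(2)) (use v sN in auto)
  show "(\<lambda>_. 0) \<longlonglongrightarrow> (0::real)" by simp
  have "(\<lambda>N. (\<Sum>n. l2norm (v n)) - (\<Sum>n<N. l2norm (v n))) \<longlonglongrightarrow> (\<Sum>n. l2norm (v n)) - (\<Sum>n. l2norm (v n))"
    by (intro tendsto_intros summable_LIMSEQ s)
  moreover have "(\<Sum>n. l2norm (v (n + N))) = (\<Sum>n. l2norm (v n)) - (\<Sum>n<N. l2norm (v n))" for N
    using suminf_split_initial_segment[OF s, of N] by simp
  ultimately show "(\<lambda>N. \<Sum>n. l2norm (v (n + N))) \<longlonglongrightarrow> 0" by simp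
qed

lemma l2norm_tendsto_coord:
  assumes "\<And>N. X N \<in> l2" "x \<in> l2" "(\<lambda>N. l2norm (X N - x)) \<longlonglongrightarrow> 0"
  shows "(\<lambda>N. X N k) \<longlonglongrightarrow> x k"
proof -
  have "(\<lambda>N. X N k - x k) \<longlonglongrightarrow> 0"
  proof (rule tendsto_norm_zero_cancel, rule tendsto_sandwich[OF _ _ tendsto_const assms(3)])
    show "\<forall>\<^sub>F n in sequentially. 0 \<le> norm (X n k - x k)" by simp
    show "\<forall>\<^sub>F n in sequentially. norm (X n k - x k) \<le> l2norm (X n - x)"
      using coord_le_l2norm[of "X _ - x" k] assms by auto
  qed
  thus ?thesis using tendsto_add[OF _ tendsto_const[of "x k"]] by fastforce
qed

definition lin_subspace :: "vec set \<Rightarrow> bool" where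
  "lin_subspace M \<longleftrightarrow> M \<subseteq> l2 \<and> 0 \<in> M \<and> (\<forall>x\<in>M. \<forall>y\<in>M. x + y \<in> M) \<and> (\<forall>c. \<forall>x\<in>M. smul c x \<in> M)"

text \<open>Closure under absolutely convergent series (implied by norm closedness) is the only
  completeness property of subspaces needed below.\<close>

definition series_closed :: "vec set \<Rightarrow> bool" where
  "series_closed M \<longleftrightarrow> (\<forall>v. (\<forall>n. v n \<in> M) \<and> summable (\<lambda>n. l2norm (v n)) \<longrightarrow> vsuminf v \<in> M)"

lemma lin_subspace_in_l2: "lin_subspace M \<Longrightarrow> x \<in> M \<Longrightarrow> x \<in> l2"
  unfolding lin_subspace_def by blast

lemma lin_subspace_zero: "lin_subspace M \<Longrightarrow> 0 \<in> M"
  unfolding lin_subspace_def by blast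

lemma lin_subspace_add: "lin_subspace M \<Longrightarrow> x \<in> M \<Longrightarrow> y \<in> M \<Longrightarrow> x + y \<in> M"
  unfolding lin_subspace_def by blast

lemma lin_subspace_smul: "lin_subspace M \<Longrightarrow> x \<in> M \<Longrightarrow> smul c x \<in> M"
  unfolding lin_subspace_def by blast

lemma lin_subspace_uminus: "lin_subspace M \<Longrightarrow> x \<in> M \<Longrightarrow> - x \<in> M"
  using lin_subspace_smul[of M x "-1"] by (simp add: smul_minus1)

lemma lin_subspace_diff: "lin_subspace M \<Longrightarrow> x \<in> M \<Longrightarrow> y \<in> M \<Longrightarrow> x - y \<in> M"
  using lin_subspace_add[of M x "-y"] lin_subspace_uminus by simp

lemma lin_subspace_vsum: "lin_subspace M \<Longrightarrow> (\<And>n. v n \<in> M) \<Longrightarrow> vsum v N \<in> M"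
  by (induction N) (auto simp: vsum_Suc lin_subspace_zero lin_subspace_add)

lemma lin_subspace_l2: "lin_subspace l2"
  unfolding lin_subspace_def by auto

lemma series_closed_l2: "series_closed l2"
  unfolding series_closed_def using vsuminf_norm_bound by blast

lemma orth_l2: "orth S \<subseteq> l2"
  unfolding orth_def by auto

lemma orthD: "y \<in> orth S \<Longrightarrow> x \<in> S \<Longrightarrow> cinner x y = 0"
  unfolding orth_def by auto

lemma orthI: "y \<in> l2 \<Longrightarrow> (\<And>x. x \<in> S \<Longrightarrow> cinner x y = 0) \<Longrightarrow> y \<in> orth S"
  unfolding orth_def by auto

lemma lin_subspace_orth: "S \<subseteq> l2 \<Longrightarrow> lin_subspace (orth S)"
  unfolding lin_subspace_def orth_def
  by (auto simp: cinner_add_right cinner_smul_right subset_iff)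

lemma cinner_vsum_right: "x \<in> l2 \<Longrightarrow> (\<And>n. v n \<in> l2) \<Longrightarrow> cinner x (vsum v N) = (\<Sum>n<N. cinner x (v n))"
  by (induction N) (auto simp: vsum_Suc cinner_add_right l2_vsum)

lemma cinner_vsuminf_right_sums:
  assumes x: "x \<in> l2" and v: "\<And>n. v n \<in> l2" and s: "summable (\<lambda>n. l2norm (v n))"
  shows "(\<lambda>n. cinner x (v n)) sums cinner x (vsuminf v)"
proof -
  have sl: "vsuminf v \<in> l2" using vsuminf_norm_bound[OF v s] by blast
  have "(\<lambda>N. cinner x (vsum v N) - cinner x (vsuminf v)) \<longlonglongrightarrow> 0"
  proof (rule tendsto_norm_zero_cancel, rule tendsto_sandwich[OF _ _ tendsto_const])
    show "\<forall>\<^sub>F n in sequentially. 0 \<le> norm (cinner x (vsum v n) - cinner x (vsuminf v))" by simp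
    show "\<forall>\<^sub>F n in sequentially. norm (cinner x (vsum v n) - cinner x (vsuminf v)) \<le> l2norm x * l2norm (vsuminf v - vsum v n)"
    proof (intro always_eventually allI)
      fix n
      have "cinner x (vsum v n) - cinner x (vsuminf v) = - cinner x (vsuminf v - vsum v n)"
        using x sl l2_vsum[OF v] by (simp add: cinner_diff_right)
      thus "norm (cinner x (vsum v n) - cinner x (vsuminf v)) \<le> l2norm x * l2norm (vsuminf v - vsum v n)"
        using cinner_Cauchy_Schwarz[of x "vsuminf v - vsum v n"] x sl l2_vsum[OF v] by simp
    qed
    show "(\<lambda>n. l2norm x * l2norm (vsuminf v - vsum v n)) \<longlonglongrightarrow> 0"
      using tendsto_mult_right_zero[OF vsum_tendsto_vsuminf[OF v s]] .
  qed
  hence "(\<lambda>N. cinner x (vsum v N)) \<longlonglongrightarrow> cinner x (vsuminf v)" using tendsto_add[OF _ tendsto_const[of "cinner x (vsuminf v)"]] by fastforce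
  thus ?thesis unfolding sums_def using cinner_vsum_right[OF x v] by simp
qed

lemma cinner_vsuminf_left_sums:
  assumes y: "y \<in> l2" and v: "\<And>n. v n \<in> l2" and s: "summable (\<lambda>n. l2norm (v n))"
  shows "(\<lambda>n. cinner (v n) y) sums cinner (vsuminf v) y"
proof -
  have sl: "vsuminf v \<in> l2" using vsuminf_norm_bound(1)[OF v s] .
  have "(\<lambda>n. cinner y (v n)) sums cinner y (vsuminf v)" by (rule cinner_vsuminf_right_sums[OF y v s])
  hence "(\<lambda>n. cnj (cinner y (v n))) sums cnj (cinner y (vsuminf v))" by (simp only: sums_cnj)
  thus ?thesis using cinner_commute[OF y v] cinner_commute[OF y sl] by simp
qed

lemma series_closed_orth: "S \<subseteq> l2 \<Longrightarrow> series_closed (orth S)"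
  unfolding series_closed_def
proof (intro allI impI)
  fix v assume S: "S \<subseteq> l2" and a: "(\<forall>n. v n \<in> orth S) \<and> summable (\<lambda>n. l2norm (v n))"
  have v: "\<And>n. v n \<in> l2" using a orth_l2 by (auto simp: subset_iff)
  have sl: "vsuminf v \<in> l2" using a by (intro vsuminf_norm_bound(1)[OF v]) auto
  have "cinner x (vsuminf v) = 0" if "x \<in> S" for x
  proof -
    have "(\<lambda>n. cinner x (v n)) sums cinner x (vsuminf v)"
      using a S that by (intro cinner_vsuminf_right_sums[OF _ v]) auto
    moreover have "(\<lambda>n. cinner x (v n)) = (\<lambda>n. 0)" using a that by (auto simp: orth_def)
    ultimately show ?thesis using sums_unique2[OF _ sums_zero] by simp
  qed
  thus "vsuminf v \<in> orth S" using sl by (auto simp: orth_def)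
qed

section \<open>Bounded operators and adjoints\<close>

lemma bounded_op_maps: "bounded_op M N L \<Longrightarrow> x \<in> M \<Longrightarrow> L x \<in> N"
  unfolding bounded_op_def by blast

lemma bounded_op_add: "bounded_op M N L \<Longrightarrow> x \<in> M \<Longrightarrow> y \<in> M \<Longrightarrow> L (x + y) = L x + L y"
  unfolding bounded_op_def by blast

lemma bounded_op_smul: "bounded_op M N L \<Longrightarrow> x \<in> M \<Longrightarrow> L (smul c x) = smul c (L x)"
  unfolding bounded_op_def by blast

lemma bounded_op_zero: "bounded_op M N L \<Longrightarrow> lin_subspace M \<Longrightarrow> L 0 = 0"
  using bounded_op_smul[of M N L 0 0] lin_subspace_zero by fastforce

lemma bounded_op_uminus: "bounded_op M N L \<Longrightarrow> x \<in> M \<Longrightarrow> L (- x) = - L x"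
  using bounded_op_smul[of M N L x "-1"] by (simp add: smul_minus1)

lemma bounded_op_diff: "bounded_op M N L \<Longrightarrow> lin_subspace M \<Longrightarrow> x \<in> M \<Longrightarrow> y \<in> M \<Longrightarrow> L (x - y) = L x - L y"
  using bounded_op_add[of M N L x "-y"] bounded_op_uminus[of M N L y] lin_subspace_uminus[of M y] by simp

lemma bounded_op_vsum: "bounded_op M N L \<Longrightarrow> lin_subspace M \<Longrightarrow> (\<And>n. v n \<in> M) \<Longrightarrow> L (vsum v K) = vsum (\<lambda>n. L (v n)) K"
  by (induction K) (auto simp: vsum_Suc bounded_op_add lin_subspace_vsum bounded_op_zero)

lemma bounded_op_bound:
  assumes "bounded_op M N L" "lin_subspace M"
  obtains C where "0 \<le> C" "\<And>x. x \<in> M \<Longrightarrow> l2norm (L x) \<le> C * l2norm x"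
proof -
  obtain C where C: "\<forall>x\<in>M. l2norm (L x) \<le> C * l2norm x" using assms(1) unfolding bounded_op_def by blast
  have "l2norm (L x) \<le> max C 0 * l2norm x" if "x \<in> M" for x
  proof -
    have "C * l2norm x \<le> max C 0 * l2norm x"
      using that assms(2) lin_subspace_in_l2 by (intro mult_right_mono) auto
    thus ?thesis using C that by force
  qed
  thus ?thesis using that[of "max C 0"] by auto
qed

lemma bounded_op_vsuminf_sums:
  assumes L: "bounded_op M N L" and M: "lin_subspace M" "series_closed M" and N: "lin_subspace N"
    and v: "\<And>n. v n \<in> M" and s: "summable (\<lambda>n. l2norm (v n))"
  shows "(\<lambda>n. L (v n) k) sums L (vsuminf v) k"
proof -
  obtain C where C: "0 \<le> C" "\<And>x. x \<in> M \<Longrightarrow> l2norm (L x) \<le> C * l2norm x"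
    using bounded_op_bound[OF L M(1)] by blast
  have vl: "\<And>n. v n \<in> l2" using v M lin_subspace_in_l2 by blast
  have sM: "vsuminf v \<in> M" using M(2) v s unfolding series_closed_def by blast
  have pM: "\<And>K. vsum v K \<in> M" using lin_subspace_vsum[OF M(1) v] .
  have "(\<lambda>K. L (vsum v K) k) \<longlonglongrightarrow> L (vsuminf v) k"
  proof (rule l2norm_tendsto_coord)
    show "\<And>K. L (vsum v K) \<in> l2" using pM bounded_op_maps[OF L] N lin_subspace_in_l2 by blast
    show "L (vsuminf v) \<in> l2" using sM bounded_op_maps[OF L] N lin_subspace_in_l2 by blast
    show "(\<lambda>K. l2norm (L (vsum v K) - L (vsuminf v))) \<longlonglongrightarrow> 0"
    proof (rule tendsto_sandwich[OF _ _ tendsto_const])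
      show "\<forall>\<^sub>F K in sequentially. 0 \<le> l2norm (L (vsum v K) - L (vsuminf v))"
        using pM sM bounded_op_maps[OF L] N lin_subspace_in_l2 by (auto intro!: always_eventually l2norm_nonneg l2_diff)
      show "\<forall>\<^sub>F K in sequentially. l2norm (L (vsum v K) - L (vsuminf v)) \<le> C * l2norm (vsuminf v - vsum v K)"
      proof (rule always_eventually, rule allI)
        fix K
        have "l2norm (L (vsum v K) - L (vsuminf v)) = l2norm (L (vsuminf v - vsum v K))"
          using bounded_op_diff[OF L M(1) sM pM[of K]] l2norm_minus_commute by simp
        also have "\<dots> \<le> C * l2norm (vsuminf v - vsum v K)"
          using C(2) lin_subspace_diff[OF M(1) sM pM] by blast
        finally show "l2norm (L (vsum v K) - L (vsuminf v)) \<le> C * l2norm (vsuminf v - vsum v K)" .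
      qed
      show "(\<lambda>K. C * l2norm (vsuminf v - vsum v K)) \<longlonglongrightarrow> 0"
        using tendsto_mult_right_zero[OF vsum_tendsto_vsuminf[OF vl s]] .
    qed
  qed
  thus ?thesis unfolding sums_def using bounded_op_vsum[OF L M(1) v] by (simp add: vsum_def)
qed

lemma bounded_op_vsuminf:
  assumes L: "bounded_op M N L" and M: "lin_subspace M" "series_closed M" and N: "lin_subspace N"
    and v: "\<And>n. v n \<in> M" and s: "summable (\<lambda>n. l2norm (v n))"
  shows "L (vsuminf v) = vsuminf (\<lambda>n. L (v n))"
  using bounded_op_vsuminf_sums[OF assms] sums_unique unfolding vsuminf_def by (auto simp: fun_eq_iff)

lemma bounded_op_comp:
  assumes L1: "bounded_op M N L1" and L2: "bounded_op N P L2" and N: "lin_subspace N"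
  shows "bounded_op M P (\<lambda>x. L2 (L1 x))"
proof -
  obtain C1 where C1: "\<forall>x\<in>M. l2norm (L1 x) \<le> C1 * l2norm x" using L1 unfolding bounded_op_def by blast
  obtain C2 where C2: "0 \<le> C2" "\<And>x. x \<in> N \<Longrightarrow> l2norm (L2 x) \<le> C2 * l2norm x"
    using bounded_op_bound[OF L2 N] by blast
  have "l2norm (L2 (L1 x)) \<le> (C2 * C1) * l2norm x" if "x \<in> M" for x
  proof -
    have "l2norm (L2 (L1 x)) \<le> C2 * l2norm (L1 x)" using C2 bounded_op_maps[OF L1 that] by blast
    also have "\<dots> \<le> C2 * (C1 * l2norm x)" using C1 that C2(1) by (simp add: mult_left_mono)
    finally show ?thesis by simp
  qed
  thus ?thesis using L1 L2 unfolding bounded_op_def by (auto simp: bounded_op_maps)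
qed

lemma bounded_op_restrict:
  assumes L: "bounded_op M M' L" and N: "N \<subseteq> M" and maps: "\<And>x. x \<in> N \<Longrightarrow> L x \<in> N'"
  shows "bounded_op N N' L"
proof -
  obtain C where C: "\<forall>x\<in>M. l2norm (L x) \<le> C * l2norm x" using L unfolding bounded_op_def by blast
  show ?thesis unfolding bounded_op_def
  proof (intro conjI ballI allI exI[of _ C])
    fix x assume x: "x \<in> N"
    show "L x \<in> N'" using maps[OF x] .
    show "l2norm (L x) \<le> C * l2norm x" using C N x by blast
    show "\<And>c. L (smul c x) = smul c (L x)" using bounded_op_smul[OF L] N x by blast
    fix y assume y: "y \<in> N"
    show "L (x + y) = L x + L y" using bounded_op_add[OF L] N x y by blast
  qed
qed

lemma bounded_op_cong:
  assumes L: "bounded_op M N L" and M: "lin_subspace M" and eq: "\<And>x. x \<in> M \<Longrightarrow> L' x = L x"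
  shows "bounded_op M N L'"
  using L eq lin_subspace_add[OF M] lin_subspace_smul[OF M] unfolding bounded_op_def by simp

lemma bounded_op_funpow: "bounded_op M M C \<Longrightarrow> lin_subspace M \<Longrightarrow> bounded_op M M (C ^^ n)"
proof (induction n)
  case 0 then show ?case unfolding bounded_op_def by (auto intro: exI[of _ 1])
next
  case (Suc n)
  then show ?case using bounded_op_comp[of M M "C ^^ n" M C] by (simp add: comp_def)
qed

lemma funpow_maps: "bounded_op M M C \<Longrightarrow> x \<in> M \<Longrightarrow> (C ^^ n) x \<in> M"
  by (induction n) (auto simp: bounded_op_maps)

lemma l2norm_funpow_le_power:
  assumes "bounded_op M M C" "\<And>x. x \<in> M \<Longrightarrow> l2norm (C x) \<le> r * l2norm x" "0 \<le> r"
  shows "x \<in> M \<Longrightarrow> l2norm ((C ^^ n) x) \<le> r ^ n * l2norm x"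
proof (induction n)
  case 0 then show ?case by simp
next
  case (Suc n)
  have "(C ^^ n) x \<in> M" using funpow_maps[OF assms(1) Suc.prems] .
  hence "l2norm ((C ^^ Suc n) x) \<le> r * l2norm ((C ^^ n) x)" using assms(2) by simp
  also have "\<dots> \<le> r * (r ^ n * l2norm x)" using Suc assms(3) by (intro mult_left_mono) auto
  finally show ?case by simp
qed

definition unit_seq :: "nat \<Rightarrow> nat \<Rightarrow> complex" where
  "unit_seq n = (\<lambda>m. if m = n then 1 else 0)"

definition trunc_seq :: "nat \<Rightarrow> (nat \<Rightarrow> complex) \<Rightarrow> nat \<Rightarrow> complex" where
  "trunc_seq N x = (\<lambda>m. if m < N then x m else 0)"

lemma unit_seq_l2[simp]: "unit_seq n \<in> l2"
  unfolding l2_def unit_seq_def by (auto intro!: summable_finite[of "{n}"] split: if_split_asm)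

lemma trunc_seq_eq_vsum: "trunc_seq N x = vsum (\<lambda>n. smul (x n) (unit_seq n)) N"
  unfolding trunc_seq_def vsum_def unit_seq_def smul_def by (auto simp: fun_eq_iff if_distrib cong: if_cong)

lemma trunc_seq_l2[simp]: "trunc_seq N x \<in> l2"
  unfolding trunc_seq_eq_vsum by (rule l2_vsum) simp

lemma cinner_vsum_left: "(\<And>n. v n \<in> l2) \<Longrightarrow> y \<in> l2 \<Longrightarrow> cinner (vsum v N) y = (\<Sum>n<N. cinner (v n) y)"
  by (induction N) (auto simp: vsum_Suc cinner_add_left l2_vsum)

lemma l2norm_trunc_seq: "l2norm (trunc_seq N z) = sqrt (\<Sum>n<N. (cmod (z n))^2)"
  unfolding l2norm_def trunc_seq_def
  by (subst suminf_finite[of "{..<N}"]) auto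

lemma sums_if_less: "(\<lambda>n. if n < N then f n else (0::'a::real_normed_vector)) sums (\<Sum>n<N. f n)"
  using sums_finite[of "{..<N}" "\<lambda>n. if n < N then f n else 0"] by simp

lemma trunc_seq_tendsto:
  assumes x: "x \<in> l2" shows "(\<lambda>N. l2norm (x - trunc_seq N x)) \<longlonglongrightarrow> 0"
proof -
  have s: "summable (\<lambda>n. (cmod (x n))^2)" using x by (simp add: l2_def)
  have eq: "l2norm (x - trunc_seq N x) = sqrt ((\<Sum>n. (cmod (x n))^2) - (\<Sum>n<N. (cmod (x n))^2))" for N
  proof -
    have "(\<lambda>m. (cmod ((x - trunc_seq N x) m))^2) = (\<lambda>m. if m < N then 0 else (cmod (x m))^2)"
      by (auto simp: trunc_seq_def fun_eq_iff)
    moreover have "(\<lambda>m. if m < N then 0 else (cmod (x m))^2) sums ((\<Sum>n. (cmod (x n))^2) - (\<Sum>n<N. (cmod (x n))^2))"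
    proof -
      have "(\<lambda>m. (cmod (x m))^2 - (if m < N then (cmod (x m))^2 else 0)) sums ((\<Sum>n. (cmod (x n))^2) - (\<Sum>n<N. (cmod (x n))^2))"
        by (intro sums_diff summable_sums s sums_if_less)
      moreover have "(\<lambda>m. (cmod (x m))^2 - (if m < N then (cmod (x m))^2 else 0)) = (\<lambda>m. if m < N then 0 else (cmod (x m))^2)"
        by auto
      ultimately show ?thesis by simp
    qed
    ultimately show ?thesis unfolding l2norm_def using sums_unique by metis
  qed
  have "(\<lambda>N. sqrt ((\<Sum>n. (cmod (x n))^2) - (\<Sum>n<N. (cmod (x n))^2))) \<longlonglongrightarrow> sqrt ((\<Sum>n. (cmod (x n))^2) - (\<Sum>n. (cmod (x n))^2))"
    by (intro tendsto_intros summable_LIMSEQ s)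
  thus ?thesis unfolding eq by simp
qed

lemma cinner_T_trunc_seq:
  assumes T: "bounded_op l2 l2 T" and y: "y \<in> l2"
  shows "cinner (T (trunc_seq N x)) y = (\<Sum>n<N. x n * cinner (T (unit_seq n)) y)"
proof -
  have T_trunc: "T (trunc_seq N x) = vsum (\<lambda>n. smul (x n) (T (unit_seq n))) N"
    unfolding trunc_seq_eq_vsum
    by (subst bounded_op_vsum[OF T lin_subspace_l2]) (auto simp: bounded_op_smul[OF T])
  show ?thesis unfolding T_trunc
    by (subst cinner_vsum_left) (auto simp: cinner_smul_left y bounded_op_maps[OF T])
qed

lemma cinner_T_trunc_seq_tendsto:
  assumes T: "bounded_op l2 l2 T" and x: "x \<in> l2" and y: "y \<in> l2"
  shows "(\<lambda>N. cinner (T (trunc_seq N x)) y) \<longlonglongrightarrow> cinner (T x) y"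
proof -
  obtain C where C: "0 \<le> C" "\<And>x. x \<in> l2 \<Longrightarrow> l2norm (T x) \<le> C * l2norm x"
    using bounded_op_bound[OF T lin_subspace_l2] by blast
  have "(\<lambda>N. cinner (T (trunc_seq N x)) y - cinner (T x) y) \<longlonglongrightarrow> 0"
  proof (rule tendsto_norm_zero_cancel, rule tendsto_sandwich[OF _ _ tendsto_const])
    show "\<forall>\<^sub>F N in sequentially. 0 \<le> norm (cinner (T (trunc_seq N x)) y - cinner (T x) y)" by simp
    show "\<forall>\<^sub>F N in sequentially.
        norm (cinner (T (trunc_seq N x)) y - cinner (T x) y) \<le> C * l2norm (x - trunc_seq N x) * l2norm y"
    proof (rule always_eventually, rule allI)
      fix N
      have "cinner (T (trunc_seq N x)) y - cinner (T x) y = - cinner (T (x - trunc_seq N x)) y"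
        using x y by (simp add: bounded_op_diff[OF T lin_subspace_l2] cinner_diff_left bounded_op_maps[OF T])
      hence "norm (cinner (T (trunc_seq N x)) y - cinner (T x) y) = norm (cinner (T (x - trunc_seq N x)) y)"
        by simp
      also have "\<dots> \<le> l2norm (T (x - trunc_seq N x)) * l2norm y"
        by (rule cinner_Cauchy_Schwarz) (auto simp: x y bounded_op_maps[OF T])
      also have "\<dots> \<le> C * l2norm (x - trunc_seq N x) * l2norm y"
        using C(2)[of "x - trunc_seq N x"] x y by (intro mult_right_mono) auto
      finally show "norm (cinner (T (trunc_seq N x)) y - cinner (T x) y)
          \<le> C * l2norm (x - trunc_seq N x) * l2norm y" .
    qed
    have "(\<lambda>N. C * l2norm (x - trunc_seq N x) * l2norm y) \<longlonglongrightarrow> C * 0 * l2norm y"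
      by (intro tendsto_intros trunc_seq_tendsto x)
    thus "(\<lambda>N. C * l2norm (x - trunc_seq N x) * l2norm y) \<longlonglongrightarrow> 0" by simp
  qed
  thus ?thesis using tendsto_add[OF _ tendsto_const[of "cinner (T x) y"]] by fastforce
qed

lemma adjoint_coeffs_l2:
  assumes T: "bounded_op l2 l2 T" and y: "y \<in> l2"
  shows "(\<lambda>n. cnj (cinner (T (unit_seq n)) y)) \<in> l2"
proof -
  obtain C where C: "0 \<le> C" "\<And>x. x \<in> l2 \<Longrightarrow> l2norm (T x) \<le> C * l2norm x"
    using bounded_op_bound[OF T lin_subspace_l2] by blast
  define z where "z = (\<lambda>n. cnj (cinner (T (unit_seq n)) y))"
  have "(\<Sum>n<N. (cmod (z n))^2) \<le> (C * l2norm y)^2" for N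
  proof -
    define s where "s = (\<Sum>n<N. (cmod (z n))^2)"
    have s0: "0 \<le> s" unfolding s_def by (simp add: sum_nonneg)
    have "complex_of_real s = (\<Sum>n<N. z n * cnj (z n))"
      unfolding s_def by (simp add: complex_mult_cnj cmod_def)
    also have "\<dots> = cinner (T (trunc_seq N z)) y" unfolding cinner_T_trunc_seq[OF T y] z_def by simp
    finally have "s = cmod (cinner (T (trunc_seq N z)) y)" using s0 by (metis norm_of_real abs_of_nonneg)
    also have "\<dots> \<le> l2norm (T (trunc_seq N z)) * l2norm y"
      by (rule cinner_Cauchy_Schwarz) (auto simp: y bounded_op_maps[OF T])
    also have "\<dots> \<le> C * l2norm (trunc_seq N z) * l2norm y"
      using C(2)[of "trunc_seq N z"] y by (intro mult_right_mono) auto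
    also have "\<dots> = C * l2norm y * sqrt s" unfolding l2norm_trunc_seq s_def by simp
    finally have le: "s \<le> C * l2norm y * sqrt s" .
    show ?thesis
    proof (cases "s = 0")
      case True then show ?thesis unfolding s_def by simp
    next
      case False
      hence sp: "0 < sqrt s" using s0 by simp
      have "sqrt s * sqrt s \<le> C * l2norm y * sqrt s" using le s0 by simp
      hence "sqrt s \<le> C * l2norm y" by (rule mult_right_le_imp_le[OF _ sp])
      hence "(sqrt s)^2 \<le> (C * l2norm y)^2" using sp by (intro power_mono) auto
      thus ?thesis using s0 unfolding s_def by simp
    qed
  qed
  thus ?thesis unfolding l2_def z_def
    by (auto intro!: summableI_nonneg_bounded[where x="(C * l2norm y)^2"])
qed

lemma adjoint_exists:
  assumes T: "bounded_op l2 l2 T" and y: "y \<in> l2"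
  shows "\<exists>z\<in>l2. \<forall>x\<in>l2. cinner (T x) y = cinner x z"
proof (intro bexI ballI)
  define z where "z = (\<lambda>n. cnj (cinner (T (unit_seq n)) y))"
  show z: "z \<in> l2" unfolding z_def using adjoint_coeffs_l2[OF T y] .
  fix x assume x: "x \<in> l2"
  have "(\<lambda>N. \<Sum>n<N. x n * cnj (z n)) \<longlonglongrightarrow> cinner x z"
    unfolding cinner_def by (rule summable_LIMSEQ[OF summable_cinner[OF x z]])
  hence "(\<lambda>N. cinner (T (trunc_seq N x)) y) \<longlonglongrightarrow> cinner x z"
    unfolding cinner_T_trunc_seq[OF T y] z_def by simp
  thus "cinner (T x) y = cinner x z"
    using LIMSEQ_unique[OF cinner_T_trunc_seq_tendsto[OF T x y]] by blast
qed

lemma cinner_right_unique: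
  assumes M: "lin_subspace M" and z: "z \<in> M" "z' \<in> M" and eq: "\<And>x. x \<in> M \<Longrightarrow> cinner x z = cinner x z'"
  shows "z = z'"
proof -
  have d: "z - z' \<in> M" using lin_subspace_diff[OF M z] .
  have "cinner (z - z') (z - z') = 0"
    using eq[OF d] d z M lin_subspace_in_l2 by (simp add: cinner_diff_right)
  thus ?thesis using cinner_self_eq_zero d M lin_subspace_in_l2 by fastforce
qed

lemma adj_on_eqI:
  assumes M: "lin_subspace M" and y: "y \<in> N" and z: "z \<in> M" and eq: "\<And>x. x \<in> M \<Longrightarrow> cinner (T x) y = cinner x z"
  shows "adj_on M N T y = z"
proof -
  have "(THE z. z \<in> M \<and> (\<forall>x\<in>M. cinner (T x) y = cinner x z)) = z"
  proof (rule the_equality)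
    show "z \<in> M \<and> (\<forall>x\<in>M. cinner (T x) y = cinner x z)" using z eq by blast
    fix z' assume h: "z' \<in> M \<and> (\<forall>x\<in>M. cinner (T x) y = cinner x z')"
    show "z' = z"
    proof (rule cinner_right_unique[OF M])
      show "z' \<in> M" using h by blast
      show "z \<in> M" using z .
      fix x assume "x \<in> M"
      thus "cinner x z' = cinner x z" using h eq[of x] by simp
    qed
  qed
  thus ?thesis unfolding adj_on_def using y by simp
qed

lemma adj_props:
  assumes T: "bounded_op l2 l2 T" and y: "y \<in> l2"
  shows "adj T y \<in> l2" "\<And>x. x \<in> l2 \<Longrightarrow> cinner (T x) y = cinner x (adj T y)"
proof -
  obtain z where z: "z \<in> l2" "\<forall>x\<in>l2. cinner (T x) y = cinner x z" using adjoint_exists[OF T y] by blast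
  have "adj T y = z" using adj_on_eqI[OF lin_subspace_l2 y z(1)] z(2) by blast
  thus "adj T y \<in> l2" "\<And>x. x \<in> l2 \<Longrightarrow> cinner (T x) y = cinner x (adj T y)" using z by auto
qed

lemma power2_le_mult_imp_le: "0 \<le> (a::real) \<Longrightarrow> a^2 \<le> a * b \<Longrightarrow> 0 \<le> b \<Longrightarrow> a \<le> b"
  by (cases "a = 0") (auto simp: power2_eq_square)

lemma adj_add:
  assumes T: "bounded_op l2 l2 T" and y: "y1 \<in> l2" "y2 \<in> l2"
  shows "adj T (y1 + y2) = adj T y1 + adj T y2"
proof (rule adj_on_eqI[OF lin_subspace_l2])
  show "y1 + y2 \<in> l2" "adj T y1 + adj T y2 \<in> l2" using y adj_props(1)[OF T] by auto
  fix x assume x: "x \<in> l2"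
  have "cinner (T x) (y1 + y2) = cinner (T x) y1 + cinner (T x) y2"
    using y x bounded_op_maps[OF T x] by (simp add: cinner_add_right)
  also have "\<dots> = cinner x (adj T y1 + adj T y2)"
    using y x adj_props[OF T] by (simp add: cinner_add_right)
  finally show "cinner (T x) (y1 + y2) = cinner x (adj T y1 + adj T y2)" .
qed

lemma adj_smul:
  assumes T: "bounded_op l2 l2 T" and y: "y \<in> l2"
  shows "adj T (smul c y) = smul c (adj T y)"
proof (rule adj_on_eqI[OF lin_subspace_l2])
  show "smul c y \<in> l2" "smul c (adj T y) \<in> l2" using y adj_props(1)[OF T] by auto
  fix x assume x: "x \<in> l2"
  have "cinner (T x) (smul c y) = cnj c * cinner (T x) y"
    using y x bounded_op_maps[OF T x] by (simp add: cinner_smul_right)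
  also have "\<dots> = cinner x (smul c (adj T y))"
    using y x adj_props[OF T] by (simp add: cinner_smul_right)
  finally show "cinner (T x) (smul c y) = cinner x (smul c (adj T y))" .
qed

lemma l2norm_adj_le:
  assumes T: "bounded_op l2 l2 T" and Tc: "\<And>x. x \<in> l2 \<Longrightarrow> l2norm (T x) \<le> l2norm x" and y: "y \<in> l2"
  shows "l2norm (adj T y) \<le> l2norm y"
proof -
  have a: "adj T y \<in> l2" using adj_props(1)[OF T y] .
  have "(l2norm (adj T y))^2 = Re (cinner (T (adj T y)) y)"
    using a adj_props(2)[OF T y a] by (simp add: l2norm_power2_cinner)
  also have "\<dots> \<le> l2norm (T (adj T y)) * l2norm y"
    using cinner_Cauchy_Schwarz[of "T (adj T y)" y] y a bounded_op_maps[OF T] complex_Re_le_cmod order_trans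
    by blast
  also have "\<dots> \<le> l2norm (adj T y) * l2norm y" using Tc[OF a] y by (intro mult_right_mono) auto
  finally show ?thesis using a y power2_le_mult_imp_le by simp
qed

lemma bounded_op_adj:
  assumes T: "bounded_op l2 l2 T" and Tc: "\<And>x. x \<in> l2 \<Longrightarrow> l2norm (T x) \<le> l2norm x"
  shows "bounded_op l2 l2 (adj T)"
  unfolding bounded_op_def using adj_props(1)[OF T] adj_add[OF T] adj_smul[OF T] l2norm_adj_le[OF T Tc]
  by (auto intro!: exI[of _ 1])

section \<open>Power series in a contraction\<close>

definition cauchy_prod :: "(nat \<Rightarrow> complex) \<Rightarrow> (nat \<Rightarrow> complex) \<Rightarrow> nat \<Rightarrow> complex" where
  "cauchy_prod f g = (\<lambda>m. \<Sum>i\<le>m. f i * g (m - i))"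

lemma summable_cauchy_prod:
  assumes f: "summable (\<lambda>n. cmod (f n))" and g: "summable (\<lambda>n. cmod (g n))"
  shows "summable (\<lambda>n. cmod (cauchy_prod f g n))"
proof -
  have "(\<lambda>k. \<Sum>i\<le>k. cmod (f i) * cmod (g (k - i))) sums ((\<Sum>k. cmod (f k)) * (\<Sum>k. cmod (g k)))"
    by (rule Cauchy_product_sums) (use f g in simp_all)
  hence s: "summable (\<lambda>k. \<Sum>i\<le>k. cmod (f i) * cmod (g (k - i)))" by (rule sums_summable)
  show ?thesis
  proof (rule summable_comparison_test'[OF s])
    fix n
    show "norm (cmod (cauchy_prod f g n)) \<le> (\<Sum>i\<le>n. cmod (f i) * cmod (g (n - i)))"
      unfolding cauchy_prod_def using norm_sum[of "\<lambda>i. f i * g (n - i)" "{..n}"] by (simp add: norm_mult)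
  qed
qed

lemma abs_summable_on_shifted_product:
  fixes f g v :: "nat \<Rightarrow> complex"
  assumes f: "summable (\<lambda>n. cmod (f n))" and g: "summable (\<lambda>n. cmod (g n))"
    and v: "\<And>m. cmod (v m) \<le> V"
  shows "(\<lambda>(i, j). f i * g j * v (i + j)) abs_summable_on UNIV"
proof -
  have V0: "0 \<le> V" using v[of 0] norm_ge_zero order_trans by blast
  define G where "G = (\<Sum>j. cmod (g j))"
  have dom: "(\<lambda>(i,j). cmod (f i) * cmod (g j) * V) summable_on Sigma UNIV (\<lambda>_. UNIV)"
  proof (rule summable_on_SigmaI[where g="\<lambda>i. cmod (f i) * G * V"])
    fix i :: nat
    have "(\<lambda>j. cmod (f i) * cmod (g j) * V) sums (cmod (f i) * G * V)"
      unfolding G_def using summable_sums[OF g] by (intro sums_mult sums_mult2)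
    thus "((\<lambda>y. (\<lambda>(i, j). cmod (f i) * cmod (g j) * V) (i, y)) has_sum cmod (f i) * G * V) UNIV"
      using g V0 by (auto intro!: norm_summable_imp_has_sum summable_mult summable_mult2 simp: abs_mult)
  next
    show "(\<lambda>i. cmod (f i) * G * V) summable_on UNIV"
      using f V0 by (auto intro!: norm_summable_imp_summable_on summable_mult2 simp: abs_mult)
  qed (use V0 in auto)
  have "(\<lambda>p. norm ((\<lambda>(i, j). f i * g j * v (i + j)) p)) summable_on Sigma UNIV (\<lambda>_. UNIV)"
  proof (rule abs_summable_on_comparison_test'[OF dom])
    fix p :: "nat \<times> nat"
    obtain i j where p: "p = (i, j)" by (cases p)
    have "cmod (f i) * cmod (g j) * cmod (v (i + j)) \<le> cmod (f i) * cmod (g j) * V"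
      by (intro mult_left_mono v) auto
    thus "norm ((\<lambda>(i, j). f i * g j * v (i + j)) p) \<le> (\<lambda>(i,j). cmod (f i) * cmod (g j) * V) p"
      by (simp add: p norm_mult)
  qed
  thus ?thesis by simp
qed

lemma suminf_mult_suminf_shift:
  fixes f g v :: "nat \<Rightarrow> complex"
  assumes f: "summable (\<lambda>n. cmod (f n))" and g: "summable (\<lambda>n. cmod (g n))"
    and v: "\<And>m. cmod (v m) \<le> V"
  shows "(\<Sum>i. f i * (\<Sum>j. g j * v (i + j))) = (\<Sum>m. cauchy_prod f g m * v m)"
proof -
  define w where "w = (\<lambda>(i, j). f i * g j * v (i + j))"
  have wabs: "w abs_summable_on UNIV" unfolding w_def by (rule abs_summable_on_shifted_product[OF f g v])
  have wsum: "w summable_on UNIV" using abs_summable_summable[OF wabs] .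
  define W where "W = infsum w UNIV"
  have hs: "(w has_sum W) (Sigma UNIV (\<lambda>_. UNIV))" unfolding W_def using wsum by simp
  have inner: "(\<lambda>j. g j * v (i + j)) sums (\<Sum>j. g j * v (i + j))" and
       innern: "summable (\<lambda>j. norm (g j * v (i + j)))" for i
  proof -
    show "summable (\<lambda>j. norm (g j * v (i + j)))"
      by (rule summable_comparison_test'[where g="\<lambda>j. cmod (g j) * V"]) 
         (use summable_mult2[OF g, of V] in simp, simp add: norm_mult mult_left_mono[OF v])
    thus "(\<lambda>j. g j * v (i + j)) sums (\<Sum>j. g j * v (i + j))"
      by (rule summable_sums[OF summable_norm_cancel])
  qed
  have A: "((\<lambda>i. f i * (\<Sum>j. g j * v (i + j))) has_sum W) UNIV"
  proof (rule has_sum_Sigma'[OF hs])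
    fix i :: nat assume "i \<in> UNIV"
    have "(\<lambda>j. f i * (g j * v (i + j))) sums (f i * (\<Sum>j. g j * v (i + j)))"
      by (rule sums_mult[OF inner])
    moreover have "summable (\<lambda>j. norm (f i * (g j * v (i + j))))"
      using summable_mult[OF innern[of i], of "cmod (f i)"] by (simp add: norm_mult)
    ultimately have "((\<lambda>j. f i * (g j * v (i + j))) has_sum (f i * (\<Sum>j. g j * v (i + j)))) UNIV"
      by (intro norm_summable_imp_has_sum)
    thus "((\<lambda>y. w (i, y)) has_sum f i * (\<Sum>j. g j * v (i + j))) UNIV"
      by (simp add: w_def mult.assoc)
  qed
  define h where "h = (\<lambda>(m::nat, i::nat). (i, m - i))"
  have bij: "bij_betw h (Sigma UNIV (\<lambda>m. {..m})) UNIV"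
    by (rule bij_betw_byWitness[where f'="\<lambda>(i, j). (i + j, i)"]) (auto simp: h_def image_def)
  have hs2: "((\<lambda>p. w (h p)) has_sum W) (Sigma UNIV (\<lambda>m. {..m}))"
    using has_sum_reindex_bij_betw[OF bij, of w W] hs by simp
  have B: "((\<lambda>m. cauchy_prod f g m * v m) has_sum W) UNIV"
  proof (rule has_sum_Sigma'[OF hs2])
    fix m :: nat assume "m \<in> UNIV"
    have "cauchy_prod f g m * v m = (\<Sum>i\<le>m. w (h (m, i)))"
      by (auto simp: cauchy_prod_def w_def h_def sum_distrib_right intro!: sum.cong)
    thus "((\<lambda>y. w (h (m, y))) has_sum cauchy_prod f g m * v m) {..m}"
      by (intro has_sum_finiteI) auto
  qed
  show ?thesis
    using sums_unique[OF has_sum_imp_sums[OF A]] sums_unique[OF has_sum_imp_sums[OF B]] by simp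
qed

definition op_series :: "(vec \<Rightarrow> vec) \<Rightarrow> (nat \<Rightarrow> complex) \<Rightarrow> vec \<Rightarrow> vec" where
  "op_series C f x = vsuminf (\<lambda>n. smul (f n) ((C ^^ n) x))"

lemma op_series_commute:
  assumes L: "bounded_op M N L" and M: "lin_subspace M" "series_closed M" and N: "lin_subspace N"
    and C: "bounded_op M M C" and comm: "\<And>x. x \<in> M \<Longrightarrow> L (C x) = C' (L x)"
    and x: "x \<in> M" and s: "summable (\<lambda>n. l2norm (smul (f n) ((C ^^ n) x)))"
  shows "L (op_series C f x) = op_series C' f (L x)"
proof -
  have pw: "L ((C ^^ n) x) = (C' ^^ n) (L x)" for n
  proof (induction n)
    case 0 then show ?case by simp
  next
    case (Suc n)
    have "L ((C ^^ Suc n) x) = L (C ((C ^^ n) x))" by simp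
    also have "\<dots> = C' (L ((C ^^ n) x))" using comm funpow_maps[OF C x] by blast
    finally show ?case using Suc by simp
  qed
  have "L (op_series C f x) = vsuminf (\<lambda>n. L (smul (f n) ((C ^^ n) x)))"
    unfolding op_series_def
    by (rule bounded_op_vsuminf[OF L M N]) (use lin_subspace_smul[OF M(1) funpow_maps[OF C x]] s in auto)
  also have "\<dots> = vsuminf (\<lambda>n. smul (f n) ((C' ^^ n) (L x)))"
    using bounded_op_smul[OF L funpow_maps[OF C x]] pw by simp
  finally show ?thesis unfolding op_series_def .
qed

locale contraction_on =
  fixes M :: "vec set" and C :: "vec \<Rightarrow> vec"
  assumes M: "lin_subspace M" "series_closed M" and C: "bounded_op M M C"
    and C_contraction: "\<And>x. x \<in> M \<Longrightarrow> l2norm (C x) \<le> l2norm x"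
begin

lemma funpow_in: "x \<in> M \<Longrightarrow> (C ^^ n) x \<in> M"
  by (rule funpow_maps[OF C])

lemma l2norm_funpow_le: "x \<in> M \<Longrightarrow> l2norm ((C ^^ n) x) \<le> l2norm x"
  using l2norm_funpow_le_power[OF C, of 1 x n] C_contraction by simp

lemma in_l2: "x \<in> M \<Longrightarrow> x \<in> l2"
  using M(1) lin_subspace_in_l2 by blast

lemma series_term_in: "x \<in> M \<Longrightarrow> smul (f n) ((C ^^ n) x) \<in> M"
  using lin_subspace_smul[OF M(1) funpow_in] .

lemma summable_series_terms:
  assumes f: "summable (\<lambda>n. cmod (f n))" and x: "x \<in> M"
  shows "summable (\<lambda>n. l2norm (smul (f n) ((C ^^ n) x)))"
proof (rule summable_comparison_test'[where g="\<lambda>n. cmod (f n) * l2norm x"])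
  show "summable (\<lambda>n. cmod (f n) * l2norm x)" using summable_mult2[OF f] .
  fix n
  have "l2norm (smul (f n) ((C ^^ n) x)) = cmod (f n) * l2norm ((C ^^ n) x)"
    by (rule l2norm_smul[OF in_l2[OF funpow_in[OF x]]])
  also have "\<dots> \<le> cmod (f n) * l2norm x" using l2norm_funpow_le[OF x] by (intro mult_left_mono) auto
  finally show "norm (l2norm (smul (f n) ((C ^^ n) x))) \<le> cmod (f n) * l2norm x"
    using in_l2[OF series_term_in[OF x]] by simp
qed

lemma op_series_in: "summable (\<lambda>n. cmod (f n)) \<Longrightarrow> x \<in> M \<Longrightarrow> op_series C f x \<in> M"
  using M(2) series_term_in[of x f] summable_series_terms[of f x] unfolding series_closed_def op_series_def by simp

lemma l2norm_op_series_le: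
  assumes f: "summable (\<lambda>n. cmod (f n))" and x: "x \<in> M"
  shows "l2norm (op_series C f x) \<le> (\<Sum>n. cmod (f n)) * l2norm x"
proof -
  have "l2norm (op_series C f x) \<le> (\<Sum>n. l2norm (smul (f n) ((C ^^ n) x)))"
    unfolding op_series_def by (rule vsuminf_norm_bound(2)) (use summable_series_terms[OF f x] in_l2[OF series_term_in[OF x]] in auto)
  also have "\<dots> \<le> (\<Sum>n. cmod (f n) * l2norm x)"
  proof (rule suminf_le)
    fix n
    have "l2norm (smul (f n) ((C ^^ n) x)) = cmod (f n) * l2norm ((C ^^ n) x)"
      by (rule l2norm_smul[OF in_l2[OF funpow_in[OF x]]])
    also have "\<dots> \<le> cmod (f n) * l2norm x" using l2norm_funpow_le[OF x] by (intro mult_left_mono) auto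
    finally show "l2norm (smul (f n) ((C ^^ n) x)) \<le> cmod (f n) * l2norm x" .
  qed (use summable_series_terms[OF f x] summable_mult2[OF f] in auto)
  also have "\<dots> = (\<Sum>n. cmod (f n)) * l2norm x" by (rule suminf_mult2[OF f, symmetric])
  finally show ?thesis .
qed

lemma op_series_coord_sums:
  assumes f: "summable (\<lambda>n. cmod (f n))" and x: "x \<in> M"
  shows "(\<lambda>n. f n * (C ^^ n) x k) sums op_series C f x k"
proof -
  have "summable (\<lambda>n. norm (smul (f n) ((C ^^ n) x) k))"
    by (rule summable_coord[where v="\<lambda>n. smul (f n) ((C ^^ n) x)", OF in_l2[OF series_term_in[OF x, of f]] summable_series_terms[OF f x]])
  hence "summable (\<lambda>n. smul (f n) ((C ^^ n) x) k)" by (rule summable_norm_cancel)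
  thus ?thesis unfolding op_series_def vsuminf_def by (simp add: summable_sums)
qed

lemma op_series_add:
  assumes f: "summable (\<lambda>n. cmod (f n))" and x: "x \<in> M" and y: "y \<in> M"
  shows "op_series C f (x + y) = op_series C f x + op_series C f y"
proof (rule ext)
  fix k
  have "(\<lambda>n. f n * (C ^^ n) x k + f n * (C ^^ n) y k) sums (op_series C f x k + op_series C f y k)"
    by (intro sums_add op_series_coord_sums f x y)
  moreover have "(\<lambda>n. f n * (C ^^ n) (x + y) k) = (\<lambda>n. f n * (C ^^ n) x k + f n * (C ^^ n) y k)"
    using bounded_op_add[OF bounded_op_funpow[OF C M(1)] x y] by (auto simp: algebra_simps)
  moreover have "(\<lambda>n. f n * (C ^^ n) (x + y) k) sums op_series C f (x + y) k"
    by (rule op_series_coord_sums[OF f lin_subspace_add[OF M(1) x y]])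
  ultimately have "op_series C f (x + y) k = op_series C f x k + op_series C f y k"
    using sums_unique2 by simp
  thus "op_series C f (x + y) k = (op_series C f x + op_series C f y) k" by simp
qed

lemma op_series_smul:
  assumes f: "summable (\<lambda>n. cmod (f n))" and x: "x \<in> M"
  shows "op_series C f (smul c x) = smul c (op_series C f x)"
proof (rule ext)
  fix k
  have "(\<lambda>n. c * (f n * (C ^^ n) x k)) sums (c * op_series C f x k)"
    by (intro sums_mult op_series_coord_sums f x)
  moreover have "(\<lambda>n. f n * (C ^^ n) (smul c x) k) = (\<lambda>n. c * (f n * (C ^^ n) x k))"
    using bounded_op_smul[OF bounded_op_funpow[OF C M(1)] x] by (auto simp: algebra_simps)
  moreover have "(\<lambda>n. f n * (C ^^ n) (smul c x) k) sums op_series C f (smul c x) k"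
    by (rule op_series_coord_sums[OF f lin_subspace_smul[OF M(1) x]])
  ultimately have "op_series C f (smul c x) k = c * op_series C f x k"
    using sums_unique2 by simp
  thus "op_series C f (smul c x) k = smul c (op_series C f x) k" by simp
qed

lemma bounded_op_op_series:
  assumes f: "summable (\<lambda>n. cmod (f n))"
  shows "bounded_op M M (op_series C f)"
  unfolding bounded_op_def using op_series_in[OF f] op_series_add[OF f] op_series_smul[OF f] l2norm_op_series_le[OF f] by (intro conjI ballI allI exI[of _ "\<Sum>n. cmod (f n)"]) auto

lemma op_series_op_series:
  assumes f: "summable (\<lambda>n. cmod (f n))" and g: "summable (\<lambda>n. cmod (g n))" and x: "x \<in> M"
  shows "op_series C f (op_series C g x) = op_series C (cauchy_prod f g) x"
proof (rule ext)
  fix k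
  have inner: "(C ^^ i) (op_series C g x) = op_series C g ((C ^^ i) x)" for i
    by (rule op_series_commute[OF bounded_op_funpow[OF C M(1)] M M(1) C _ x summable_series_terms[OF g x]])
       (simp add: funpow_swap1)
  have inner2: "op_series C g ((C ^^ i) x) k = (\<Sum>j. g j * (C ^^ (i + j)) x k)" for i
  proof -
    have "(\<lambda>j. g j * (C ^^ j) ((C ^^ i) x) k) sums op_series C g ((C ^^ i) x) k"
      by (rule op_series_coord_sums[OF g funpow_in[OF x]])
    moreover have "(C ^^ j) ((C ^^ i) x) = (C ^^ (i + j)) x" for j
      by (subst add.commute) (simp add: funpow_add)
    ultimately show ?thesis using sums_unique by simp
  qed
  have "op_series C f (op_series C g x) k = (\<Sum>i. f i * (C ^^ i) (op_series C g x) k)"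
    using sums_unique[OF op_series_coord_sums[OF f op_series_in[OF g x]]] by simp
  also have "\<dots> = (\<Sum>i. f i * (\<Sum>j. g j * (C ^^ (i + j)) x k))"
    using inner inner2 by simp
  also have "\<dots> = (\<Sum>m. cauchy_prod f g m * (C ^^ m) x k)"
  proof (rule suminf_mult_suminf_shift[OF f g])
    fix m show "cmod ((C ^^ m) x k) \<le> l2norm x"
      using coord_le_l2norm[OF in_l2[OF funpow_in[OF x]], of m k] l2norm_funpow_le[OF x, of m] by linarith
  qed
  also have "\<dots> = op_series C (cauchy_prod f g) x k"
    using sums_unique[OF op_series_coord_sums[OF summable_cauchy_prod[OF f g] x]] by simp
  finally show "op_series C f (op_series C g x) k = op_series C (cauchy_prod f g) x k" .
qed

end

section \<open>Positive square roots\<close>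

definition sqrt_coeff :: "nat \<Rightarrow> complex" where
  "sqrt_coeff n = complex_of_real ((1/2::real) gchoose n)"

lemma neg_half_gchoose_sign: "0 \<le> ((-1/2::real) gchoose m) * (-1)^m"
proof -
  have "((-1/2::real) gchoose m) = (-1)^m * ((of_nat m - (-1/2) - 1) gchoose m)"
    by (rule gbinomial_negated_upper)
  hence e: "((-1/2::real) gchoose m) * (-1)^m = ((of_nat m - 1/2) gchoose m)"
    by (simp add: power_mult_distrib[symmetric] mult.commute)
  have "0 \<le> ((of_nat m - 1/2::real) gchoose m)"
    unfolding gbinomial_altdef_of_nat by (intro prod_nonneg) auto
  thus ?thesis using e by simp
qed

lemma half_gchoose_sign: "k \<ge> 1 \<Longrightarrow> ((1/2::real) gchoose k) * (-1)^k \<le> 0"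
proof -
  assume k: "k \<ge> 1"
  have "((1/2::real) gchoose k) = ((1/2) / of_nat k) * ((1/2 - 1) gchoose (k - 1))"
    using k by (intro gbinomial_absorption') auto
  hence "((1/2::real) gchoose k) * (-1)^k = - ((1/2) / of_nat k) * (((-1/2) gchoose (k - 1)) * (-1)^(k-1))"
    using k by (cases k) (auto simp: algebra_simps)
  moreover have "0 \<le> ((1/2::real) / of_nat k) * (((-1/2) gchoose (k - 1)) * (-1)^(k-1))"
    using neg_half_gchoose_sign[of "k - 1"] by simp
  ultimately show ?thesis by simp
qed

lemma abs_half_gchoose: "\<bar>(1/2::real) gchoose k\<bar> = (if k = 0 then 2 else 0) - ((1/2::real) gchoose k) * (-1)^k"
proof (cases "k = 0")
  case True then show ?thesis by simp
next
  case False
  hence s: "((1/2::real) gchoose k) * (-1)^k \<le> 0" using half_gchoose_sign by simp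
  have "\<bar>(1/2::real) gchoose k\<bar> = \<bar>((1/2::real) gchoose k) * (-1)^k\<bar>" by (simp add: abs_mult)
  also have "\<dots> = - (((1/2::real) gchoose k) * (-1)^k)" using s by simp
  finally show ?thesis using False by simp
qed

lemma sum_abs_half_gchoose: "(\<Sum>k\<le>m. \<bar>(1/2::real) gchoose k\<bar>) = 2 - ((-1/2::real) gchoose m) * (-1)^m"
proof -
  have "(\<Sum>k\<le>m. \<bar>(1/2::real) gchoose k\<bar>) = (\<Sum>k\<le>m. (if k = 0 then 2 else 0)) - (\<Sum>k\<le>m. ((1/2::real) gchoose k) * (-1)^k)"
    by (simp add: abs_half_gchoose sum_subtractf)
  also have "(\<Sum>k\<le>m. (if k = 0 then 2 else (0::real))) = 2" by (simp add: sum.delta)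
  also have "(\<Sum>k\<le>m. ((1/2::real) gchoose k) * (-1)^k) = (-1)^m * ((1/2 - 1) gchoose m)"
    by (rule gbinomial_sum_lower_neg)
  finally show ?thesis by (simp add: mult.commute)
qed

lemma sum_abs_half_gchoose_le: "(\<Sum>k\<le>m. \<bar>(1/2::real) gchoose k\<bar>) \<le> 2"
  using sum_abs_half_gchoose[of m] neg_half_gchoose_sign[of m] by simp

lemma summable_sqrt_coeff: "summable (\<lambda>n. cmod (sqrt_coeff n))"
proof (rule summableI_nonneg_bounded[where x=2])
  fix n
  show "(\<Sum>k<n. cmod (sqrt_coeff k)) \<le> 2"
  proof (cases n)
    case 0 then show ?thesis by simp
  next
    case (Suc m)
    have "(\<Sum>k<n. cmod (sqrt_coeff k)) = (\<Sum>k\<le>m. \<bar>(1/2::real) gchoose k\<bar>)"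
      unfolding Suc sqrt_coeff_def lessThan_Suc_atMost by simp
    thus ?thesis using sum_abs_half_gchoose_le by simp
  qed
qed simp

lemma sqrt_coeff_0: "sqrt_coeff 0 = 1"
  by (simp add: sqrt_coeff_def)

lemma suminf_sqrt_coeff_tail_le: "(\<Sum>n. cmod (sqrt_coeff (Suc n))) \<le> 1"
proof (rule suminf_le_const)
  show "summable (\<lambda>n. cmod (sqrt_coeff (Suc n)))"
    using summable_sqrt_coeff summable_iff_shift[where f="\<lambda>n. cmod (sqrt_coeff n)" and k=1] by simp
  fix N
  have "(\<Sum>n<Suc N. cmod (sqrt_coeff n)) = cmod (sqrt_coeff 0) + (\<Sum>n<N. cmod (sqrt_coeff (Suc n)))"
    by (rule sum.lessThan_Suc_shift)
  moreover have "(\<Sum>n<Suc N. cmod (sqrt_coeff n)) \<le> 2 - ((-1/2::real) gchoose N) * (-1)^N"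
    unfolding lessThan_Suc_atMost sqrt_coeff_def using sum_abs_half_gchoose[of N] by simp
  ultimately show "(\<Sum>n<N. cmod (sqrt_coeff (Suc n))) \<le> 1"
    using neg_half_gchoose_sign[of N] sqrt_coeff_0 by simp
qed

lemma cnj_sqrt_coeff: "cnj (sqrt_coeff n) = sqrt_coeff n"
  by (simp add: sqrt_coeff_def)

lemma cauchy_prod_sqrt_coeff: "cauchy_prod sqrt_coeff sqrt_coeff = (\<lambda>m. if m \<le> 1 then 1 else 0)"
proof (rule ext)
  fix m
  have "fps_nth (fps_binomial (1/2::real) * fps_binomial (1/2)) m = fps_nth (fps_binomial 1) m"
    using fps_binomial_add_mult[of "1/2::real" "1/2"] by simp
  hence "(\<Sum>i\<le>m. ((1/2::real) gchoose i) * ((1/2) gchoose (m - i))) = (1::real) gchoose m"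
    by (simp add: fps_mult_nth atLeast0AtMost)
  moreover have "(1::real) gchoose m = (if m \<le> 1 then 1 else 0)"
  proof -
    have "(1::real) gchoose m = of_nat (1 choose m)" using binomial_gbinomial[of 1 m, where 'a=real] by simp
    thus ?thesis by (cases m) (auto simp: binomial_eq_0)
  qed
  ultimately show "cauchy_prod sqrt_coeff sqrt_coeff m = (if m \<le> 1 then 1 else 0)"
    unfolding cauchy_prod_def sqrt_coeff_def by (simp flip: of_real_mult of_real_sum)
qed

definition is_pos_sqrt :: "vec set \<Rightarrow> (vec \<Rightarrow> vec) \<Rightarrow> (vec \<Rightarrow> vec) \<Rightarrow> bool" where
  "is_pos_sqrt M A S \<longleftrightarrow> bounded_op M M S \<and> (\<forall>x. x \<notin> M \<longrightarrow> S x = 0)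
     \<and> (\<forall>x\<in>M. \<forall>y\<in>M. cinner (S x) y = cinner x (S y))
     \<and> (\<forall>x\<in>M. Im (cinner (S x) x) = 0 \<and> 0 \<le> Re (cinner (S x) x))
     \<and> (\<forall>x\<in>M. S (S x) = A x)"

lemma op_sqrt_on_eq_The: "op_sqrt_on M A = (THE S. is_pos_sqrt M A S)"
  unfolding op_sqrt_on_def is_pos_sqrt_def ..

lemma is_pos_sqrtD:
  assumes "is_pos_sqrt M A S"
  shows "bounded_op M M S" "\<And>x y. x \<in> M \<Longrightarrow> y \<in> M \<Longrightarrow> cinner (S x) y = cinner x (S y)"
    "\<And>x. x \<in> M \<Longrightarrow> S (S x) = A x" "\<And>x. x \<in> M \<Longrightarrow> 0 \<le> Re (cinner (S x) x)"
    "\<And>x. x \<notin> M \<Longrightarrow> S x = 0"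
  using assms unfolding is_pos_sqrt_def by auto

text \<open>If \<open>Re \<langle>P y, y\<rangle> = 0\<close> but \<open>u = P y \<noteq> 0\<close>, then \<open>w = y - t u\<close> has
  \<open>Re \<langle>P w, w\<rangle> = t (t \<langle>P u, u\<rangle> - 2 \<parallel>u\<parallel>\<^sup>2) < 0\<close> for small \<open>t > 0\<close>.\<close>

lemma pos_form_zero_imp_zero:
  assumes M: "lin_subspace M" and P: "bounded_op M M P"
    and sa: "\<And>x y. x \<in> M \<Longrightarrow> y \<in> M \<Longrightarrow> cinner (P x) y = cinner x (P y)"
    and pos: "\<And>z. z \<in> M \<Longrightarrow> 0 \<le> Re (cinner (P z) z)"
    and y: "y \<in> M" and z: "Re (cinner (P y) y) = 0"
  shows "P y = 0"
proof (rule ccontr)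
  assume ne: "P y \<noteq> 0"
  define u where "u = P y"
  have uM: "u \<in> M" unfolding u_def using bounded_op_maps[OF P y] .
  have PuM: "P u \<in> M" using bounded_op_maps[OF P uM] .
  have l: "y \<in> l2" "u \<in> l2" "P u \<in> l2" using y uM PuM M lin_subspace_in_l2 by auto
  define a where "a = Re (cinner u u)"
  define c where "c = Re (cinner (P u) u)"
  have a_pos: "0 < a" unfolding a_def using ne l(2) u_def
    by (metis cinner_self l2norm_eq_zero_iff Re_complex_of_real zero_less_power2)
  have c0: "0 \<le> c" unfolding c_def using pos[OF uM] .
  define t where "t = a / (c + 1)"
  have t0: "0 < t" unfolding t_def using a_pos c0 by simp
  have tc: "t * c \<le> a"
  proof -
    have "t * c = a * (c / (c + 1))" unfolding t_def by simp
    also have "\<dots> \<le> a * 1" using a_pos c0 by (intro mult_left_mono) auto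
    finally show ?thesis by simp
  qed
  define w where "w = y - smul (complex_of_real t) u"
  have wM: "w \<in> M" unfolding w_def using lin_subspace_diff[OF M y lin_subspace_smul[OF M uM]] .
  have Pw: "P w = u - smul (complex_of_real t) (P u)"
    unfolding w_def u_def using bounded_op_diff[OF P M y lin_subspace_smul[OF M uM]] bounded_op_smul[OF P uM] u_def by simp
  have lw: "smul (complex_of_real t) u \<in> l2" "smul (complex_of_real t) (P u) \<in> l2" using l by auto
  have expand: "cinner (P w) w = cinner u y - complex_of_real t * cinner u u
      - complex_of_real t * cinner (P u) y + complex_of_real t * complex_of_real t * cinner (P u) u"
  proof -
    have "cinner (P w) w = cinner (u - smul (complex_of_real t) (P u)) (y - smul (complex_of_real t) u)"
      unfolding Pw by (simp add: w_def)
    thus ?thesis using l lw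
      by (simp add: cinner_diff_left cinner_diff_right cinner_smul_left cinner_smul_right algebra_simps)
  qed
  have Puy: "cinner (P u) y = cinner u u" using sa[OF uM y] unfolding u_def by simp
  have Ruy: "Re (cinner u y) = 0" using z unfolding u_def .
  have "Re (cinner (P w) w) = - t * a - t * a + t * t * c"
    unfolding expand Puy a_def c_def using Ruy by simp
  also have "\<dots> = t * (t * c - 2 * a)" by (simp add: algebra_simps)
  also have "\<dots> \<le> t * (- a)" using tc t0 by (intro mult_left_mono) auto
  also have "\<dots> < 0" using t0 a_pos by simp
  finally show False using pos[OF wM] by simp
qed

lemma commuting_pos_sqrts_eq:
  assumes M: "lin_subspace M" and S: "is_pos_sqrt M A S" and S': "is_pos_sqrt M A S'"
    and comm: "\<And>x. x \<in> M \<Longrightarrow> S (S' x) = S' (S x)"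
  shows "S = S'"
proof
  fix x show "S x = S' x"
  proof (cases "x \<in> M")
    case False then show ?thesis using is_pos_sqrtD(5)[OF S] is_pos_sqrtD(5)[OF S'] by simp
  next
    case x: True
    note Sb = is_pos_sqrtD(1)[OF S] and S'b = is_pos_sqrtD(1)[OF S']
    define y where "y = S' x - S x"
    have S'x: "S' x \<in> M" and Sx: "S x \<in> M" using bounded_op_maps[OF S'b x] bounded_op_maps[OF Sb x] .
    have yM: "y \<in> M" unfolding y_def using lin_subspace_diff[OF M S'x Sx] .
    have yl: "y \<in> l2" "S' y \<in> l2" "S y \<in> l2"
      using yM bounded_op_maps[OF S'b yM] bounded_op_maps[OF Sb yM] M lin_subspace_in_l2 by auto
    have "S' y + S y = 0"
      using bounded_op_diff[OF S'b M S'x Sx] bounded_op_diff[OF Sb M S'x Sx] comm[OF x]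
        is_pos_sqrtD(3)[OF S x] is_pos_sqrtD(3)[OF S' x] unfolding y_def by simp
    hence "Re (cinner (S' y) y) + Re (cinner (S y) y) = 0"
      using yl by (metis cinner_add_left cinner_zero_left plus_complex.sel(1) zero_complex.sel(1))
    hence "Re (cinner (S' y) y) = 0" "Re (cinner (S y) y) = 0"
      using is_pos_sqrtD(4)[OF S yM] is_pos_sqrtD(4)[OF S' yM] by linarith+
    hence "S' y = 0" "S y = 0"
      using pos_form_zero_imp_zero[OF M S'b is_pos_sqrtD(2,4)[OF S'] yM]
        pos_form_zero_imp_zero[OF M Sb is_pos_sqrtD(2,4)[OF S] yM] by auto
    hence "cinner x (S' y) - cinner x (S y) = 0" by simp
    hence "cinner y y = 0"
      using is_pos_sqrtD(2)[OF S' x yM] is_pos_sqrtD(2)[OF S x yM] yl S'x Sx M lin_subspace_in_l2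
      unfolding y_def by (simp add: cinner_diff_left)
    thus ?thesis using cinner_self_eq_zero[OF yl(1)] unfolding y_def by simp
  qed
qed

locale selfadjoint_contraction =
  fixes M :: "vec set" and B :: "vec \<Rightarrow> vec"
  assumes M: "lin_subspace M" "series_closed M" and B: "bounded_op M M B"
    and B_contraction: "\<And>x. x \<in> M \<Longrightarrow> l2norm (B x) \<le> l2norm x"
    and B_selfadjoint: "\<And>x y. x \<in> M \<Longrightarrow> y \<in> M \<Longrightarrow> cinner (B x) y = cinner x (B y)"
begin

definition negB :: "vec \<Rightarrow> vec" where "negB = (\<lambda>x. - B x)"

definition sqrt_series :: "vec \<Rightarrow> vec" where "sqrt_series = (\<lambda>x. if x \<in> M then op_series negB sqrt_coeff x else 0)"

lemma in_l2: "x \<in> M \<Longrightarrow> x \<in> l2"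
  using M(1) lin_subspace_in_l2 by blast

lemma bounded_op_negB: "bounded_op M M negB"
  unfolding bounded_op_def negB_def
proof (intro conjI)
  show "\<forall>x\<in>M. - B x \<in> M" using lin_subspace_uminus[OF M(1) bounded_op_maps[OF B]] by blast
  show "\<forall>x\<in>M. \<forall>y\<in>M. - B (x + y) = - B x + - B y" using bounded_op_add[OF B] by simp
  show "\<forall>c. \<forall>x\<in>M. - B (smul c x) = smul c (- B x)" using bounded_op_smul[OF B] by (auto simp: smul_def)
  show "\<exists>C. \<forall>x\<in>M. l2norm (- B x) \<le> C * l2norm x" using B_contraction by (auto simp: l2norm_uminus intro!: exI[of _ 1])
qed

lemma contraction_on_negB: "contraction_on M negB"
  by unfold_locales (use M bounded_op_negB B_contraction in \<open>auto simp: negB_def l2norm_uminus\<close>)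

interpretation negB: contraction_on M negB by (rule contraction_on_negB)

lemma negB_selfadjoint: "x \<in> M \<Longrightarrow> y \<in> M \<Longrightarrow> cinner (negB x) y = cinner x (negB y)"
  unfolding negB_def using B_selfadjoint bounded_op_maps[OF B] in_l2 by (simp add: cinner_minus_left cinner_minus_right)

lemma funpow_negB_selfadjoint: "x \<in> M \<Longrightarrow> y \<in> M \<Longrightarrow> cinner ((negB ^^ n) x) y = cinner x ((negB ^^ n) y)"
proof (induction n arbitrary: x y)
  case 0 then show ?case by simp
next
  case (Suc n)
  have "cinner ((negB ^^ Suc n) x) y = cinner (negB ((negB ^^ n) x)) y" by simp
  also have "\<dots> = cinner ((negB ^^ n) x) (negB y)" by (rule negB_selfadjoint[OF negB.funpow_in[OF Suc.prems(1)] Suc.prems(2)])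
  also have "\<dots> = cinner x ((negB ^^ n) (negB y))" by (rule Suc.IH[OF Suc.prems(1) bounded_op_maps[OF bounded_op_negB Suc.prems(2)]])
  also have "\<dots> = cinner x ((negB ^^ Suc n) y)" by (simp add: funpow_swap1)
  finally show ?case .
qed

lemma op_series_cinner_sums:
  assumes f: "summable (\<lambda>n. cmod (f n))" and x: "x \<in> M" and y: "y \<in> l2"
  shows "(\<lambda>n. f n * cinner ((negB ^^ n) x) y) sums cinner (op_series negB f x) y"
proof -
  have "(\<lambda>n. cinner (smul (f n) ((negB ^^ n) x)) y) sums cinner (op_series negB f x) y"
    unfolding op_series_def
    by (rule cinner_vsuminf_left_sums[OF y]) (use in_l2[OF negB.series_term_in[OF x]] negB.summable_series_terms[OF f x] in auto)
  thus ?thesis using in_l2[OF negB.funpow_in[OF x]] y by (simp add: cinner_smul_left)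
qed

lemma sqrt_series_selfadjoint:
  assumes x: "x \<in> M" and y: "y \<in> M"
  shows "cinner (sqrt_series x) y = cinner x (sqrt_series y)"
proof -
  have s1: "(\<lambda>n. sqrt_coeff n * cinner ((negB ^^ n) x) y) sums cinner (op_series negB sqrt_coeff x) y"
    by (rule op_series_cinner_sums[OF summable_sqrt_coeff x in_l2[OF y]])
  have "(\<lambda>n. sqrt_coeff n * cinner ((negB ^^ n) y) x) sums cinner (op_series negB sqrt_coeff y) x"
    by (rule op_series_cinner_sums[OF summable_sqrt_coeff y in_l2[OF x]])
  hence "(\<lambda>n. cnj (sqrt_coeff n * cinner ((negB ^^ n) y) x)) sums cnj (cinner (op_series negB sqrt_coeff y) x)"
    by (simp only: sums_cnj)
  moreover have "cnj (sqrt_coeff n * cinner ((negB ^^ n) y) x) = sqrt_coeff n * cinner ((negB ^^ n) x) y" for n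
  proof -
    have "cnj (cinner ((negB ^^ n) y) x) = cinner x ((negB ^^ n) y)"
      using cinner_commute[OF in_l2[OF x] in_l2[OF negB.funpow_in[OF y]]] by simp
    also have "\<dots> = cinner ((negB ^^ n) x) y" using funpow_negB_selfadjoint[OF x y] by simp
    finally show ?thesis by (simp add: cnj_sqrt_coeff)
  qed
  ultimately have "(\<lambda>n. sqrt_coeff n * cinner ((negB ^^ n) x) y) sums cnj (cinner (op_series negB sqrt_coeff y) x)" by simp
  hence "cinner (op_series negB sqrt_coeff x) y = cnj (cinner (op_series negB sqrt_coeff y) x)" using sums_unique2[OF s1] by simp
  also have "\<dots> = cinner x (op_series negB sqrt_coeff y)"
    using cinner_commute[OF in_l2[OF x] in_l2[OF negB.op_series_in[OF summable_sqrt_coeff y]]] by simp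
  finally show ?thesis unfolding sqrt_series_def using x y by simp
qed

text \<open>As \<open>\<Sum>\<^sub>n\<^sub>\<ge>\<^sub>1 \<bar>(1/2 choose n)\<bar> \<le> 1\<close>, the term \<open>\<parallel>x\<parallel>\<^sup>2\<close> for \<open>n = 0\<close> dominates the
  rest of the series for \<open>\<langle>S x, x\<rangle>\<close>.\<close>

lemma sqrt_series_nonneg:
  assumes x: "x \<in> M"
  shows "0 \<le> Re (cinner (sqrt_series x) x)"
proof -
  define a where "a = (\<lambda>n. sqrt_coeff n * cinner ((negB ^^ n) x) x)"
  have s: "a sums cinner (op_series negB sqrt_coeff x) x" unfolding a_def by (rule op_series_cinner_sums[OF summable_sqrt_coeff x in_l2[OF x]])
  hence sr: "(\<lambda>n. Re (a n)) sums Re (cinner (op_series negB sqrt_coeff x) x)"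
    by (rule bounded_linear.sums[OF bounded_linear_Re])
  have bnd: "cmod (a n) \<le> cmod (sqrt_coeff n) * (l2norm x)^2" for n
  proof -
    have "cmod (cinner ((negB ^^ n) x) x) \<le> l2norm ((negB ^^ n) x) * l2norm x"
      by (rule cinner_Cauchy_Schwarz[OF in_l2[OF negB.funpow_in[OF x]] in_l2[OF x]])
    also have "\<dots> \<le> l2norm x * l2norm x" using negB.l2norm_funpow_le[OF x] in_l2[OF x] by (intro mult_right_mono) auto
    finally show ?thesis unfolding a_def by (simp add: norm_mult power2_eq_square mult_left_mono)
  qed
  have a0: "Re (a 0) = (l2norm x)^2" unfolding a_def using in_l2[OF x] by (simp add: sqrt_coeff_0 cinner_self)
  have sr2: "(\<lambda>n. Re (a (Suc n))) sums (Re (cinner (op_series negB sqrt_coeff x) x) - Re (a 0))"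
    using sr sums_Suc_iff[of "\<lambda>n. Re (a n)"] by simp
  have st: "summable (\<lambda>n. cmod (sqrt_coeff (Suc n)))"
    using summable_sqrt_coeff summable_iff_shift[where f="\<lambda>n. cmod (sqrt_coeff n)" and k=1] by simp
  have "- (\<Sum>n. cmod (sqrt_coeff (Suc n)) * (l2norm x)^2) \<le> (\<Sum>n. Re (a (Suc n)))"
  proof -
    have "(\<Sum>n. - (cmod (sqrt_coeff (Suc n)) * (l2norm x)^2)) \<le> (\<Sum>n. Re (a (Suc n)))"
    proof (rule suminf_le)
      fix n show "- (cmod (sqrt_coeff (Suc n)) * (l2norm x)^2) \<le> Re (a (Suc n))"
        using bnd[of "Suc n"] abs_Re_le_cmod[of "a (Suc n)"] by linarith
    qed (use sums_summable[OF sr2] summable_minus[OF summable_mult2[OF st]] in auto)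
    thus ?thesis using suminf_minus[OF summable_mult2[OF st]] by simp
  qed
  moreover have "(\<Sum>n. cmod (sqrt_coeff (Suc n)) * (l2norm x)^2) \<le> (l2norm x)^2"
  proof -
    have "(\<Sum>n. cmod (sqrt_coeff (Suc n)) * (l2norm x)^2) = (\<Sum>n. cmod (sqrt_coeff (Suc n))) * (l2norm x)^2"
      by (rule suminf_mult2[OF st, symmetric])
    also have "\<dots> \<le> 1 * (l2norm x)^2" using suminf_sqrt_coeff_tail_le by (intro mult_right_mono) auto
    finally show ?thesis by simp
  qed
  ultimately have "0 \<le> (l2norm x)^2 + (\<Sum>n. Re (a (Suc n)))" by linarith
  also have "(\<Sum>n. Re (a (Suc n))) = Re (cinner (op_series negB sqrt_coeff x) x) - (l2norm x)^2"
    using sums_unique[OF sr2] a0 by simp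
  finally show ?thesis unfolding sqrt_series_def using x by simp
qed

lemma sqrt_series_real:
  assumes x: "x \<in> M" shows "Im (cinner (sqrt_series x) x) = 0"
proof -
  have "cinner (sqrt_series x) x = cinner x (sqrt_series x)" using sqrt_series_selfadjoint[OF x x] .
  also have "\<dots> = cnj (cinner (sqrt_series x) x)"
    using cinner_commute[OF in_l2[OF x]] x in_l2 negB.op_series_in[OF summable_sqrt_coeff x] unfolding sqrt_series_def by simp
  finally have "cinner (sqrt_series x) x = cnj (cinner (sqrt_series x) x)" .
  thus ?thesis by (metis cnj.simps(2) neg_equal_zero)
qed

lemma sqrt_series_in: "x \<in> M \<Longrightarrow> sqrt_series x \<in> M"
  unfolding sqrt_series_def using negB.op_series_in[OF summable_sqrt_coeff] by simp

lemma sqrt_series_square: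
  assumes x: "x \<in> M" shows "sqrt_series (sqrt_series x) = x - B x"
proof -
  have "sqrt_series (sqrt_series x) = op_series negB sqrt_coeff (op_series negB sqrt_coeff x)" unfolding sqrt_series_def using x negB.op_series_in[OF summable_sqrt_coeff x] by simp
  also have "\<dots> = op_series negB (cauchy_prod sqrt_coeff sqrt_coeff) x" by (rule negB.op_series_op_series[OF summable_sqrt_coeff summable_sqrt_coeff x])
  also have "\<dots> = x - B x"
  proof (rule ext)
    fix k
    have "(\<lambda>n. cauchy_prod sqrt_coeff sqrt_coeff n * (negB ^^ n) x k) sums op_series negB (cauchy_prod sqrt_coeff sqrt_coeff) x k"
      by (rule negB.op_series_coord_sums[OF summable_cauchy_prod[OF summable_sqrt_coeff summable_sqrt_coeff] x])
    moreover have "(\<lambda>n. cauchy_prod sqrt_coeff sqrt_coeff n * (negB ^^ n) x k) sums (\<Sum>n\<in>{0,1}. cauchy_prod sqrt_coeff sqrt_coeff n * (negB ^^ n) x k)"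
      by (rule sums_finite) (auto simp: cauchy_prod_sqrt_coeff)
    ultimately have "op_series negB (cauchy_prod sqrt_coeff sqrt_coeff) x k = (\<Sum>n\<in>{0,1}. cauchy_prod sqrt_coeff sqrt_coeff n * (negB ^^ n) x k)"
      using sums_unique2 by blast
    also have "\<dots> = x k - B x k" by (simp add: cauchy_prod_sqrt_coeff negB_def)
    finally show "op_series negB (cauchy_prod sqrt_coeff sqrt_coeff) x k = (x - B x) k" by simp
  qed
  finally show ?thesis .
qed

lemma bounded_op_sqrt_series: "bounded_op M M sqrt_series"
proof -
  have "bounded_op M M (op_series negB sqrt_coeff)" by (rule negB.bounded_op_op_series[OF summable_sqrt_coeff])
  thus ?thesis unfolding bounded_op_def sqrt_series_def
    using lin_subspace_add[OF M(1)] lin_subspace_smul[OF M(1)] by auto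
qed

lemma is_pos_sqrt_sqrt_series:
  assumes A: "\<And>x. x \<in> M \<Longrightarrow> A x = x - B x"
  shows "is_pos_sqrt M A sqrt_series"
  unfolding is_pos_sqrt_def using bounded_op_sqrt_series sqrt_series_selfadjoint sqrt_series_nonneg sqrt_series_real sqrt_series_square A sqrt_series_in
  by (auto simp: sqrt_series_def)

lemma pos_sqrt_unique:
  assumes A: "\<And>x. x \<in> M \<Longrightarrow> A x = x - B x" and S: "is_pos_sqrt M A S"
  shows "S = sqrt_series"
proof -
  note Sb = is_pos_sqrtD(1)[OF S] and Ssq = is_pos_sqrtD(3)[OF S]
  have SB: "S (B x) = B (S x)" if x: "x \<in> M" for x
  proof -
    have Sx: "S x \<in> M" using bounded_op_maps[OF Sb x] .
    have "S (S (S x)) = S x - B (S x)" using Ssq[OF Sx] A[OF Sx] by simp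
    moreover have "S (S (S x)) = S x - S (B x)"
      using Ssq[OF x] A[OF x] bounded_op_diff[OF Sb M(1) x bounded_op_maps[OF B x]] by simp
    ultimately show ?thesis by simp
  qed
  have SC: "S (negB x) = negB (S x)" if x: "x \<in> M" for x
    unfolding negB_def using SB[OF x] bounded_op_uminus[OF Sb bounded_op_maps[OF B x]] by simp
  have comm: "S (sqrt_series x) = sqrt_series (S x)" if x: "x \<in> M" for x
  proof -
    have "S (op_series negB sqrt_coeff x) = op_series negB sqrt_coeff (S x)"
      by (rule op_series_commute[OF Sb M M(1) bounded_op_negB SC x negB.summable_series_terms[OF summable_sqrt_coeff x]])
    thus ?thesis unfolding sqrt_series_def using x bounded_op_maps[OF Sb x] by simp
  qed
  show ?thesis
    by (rule commuting_pos_sqrts_eq[OF M(1) S is_pos_sqrt_sqrt_series[OF A] comm])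
qed

lemma op_sqrt_on_eq_sqrt_series:
  assumes A: "\<And>x. x \<in> M \<Longrightarrow> A x = x - B x"
  shows "op_sqrt_on M A = sqrt_series"
  unfolding op_sqrt_on_eq_The
proof (rule the_equality)
  show "is_pos_sqrt M A sqrt_series" by (rule is_pos_sqrt_sqrt_series[OF A])
  fix S assume h: "is_pos_sqrt M A S"
  show "S = sqrt_series" by (rule pos_sqrt_unique[where A=A]) (use A h in auto)
qed

lemma op_sqrt_on_unique:
  assumes S: "is_pos_sqrt M A S" and A: "\<And>x. x \<in> M \<Longrightarrow> A x = x - B x"
  shows "op_sqrt_on M A = S"
  using op_sqrt_on_eq_sqrt_series[OF A] pos_sqrt_unique[OF A S] by simp

lemma is_pos_sqrt_op_sqrt_on:
  assumes A: "\<And>x. x \<in> M \<Longrightarrow> A x = x - B x"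
  shows "is_pos_sqrt M A (op_sqrt_on M A)"
  using op_sqrt_on_eq_sqrt_series[OF A] is_pos_sqrt_sqrt_series[OF A] by simp

end

lemma op_inv_on_eqI:
  assumes inj: "\<And>x x'. x \<in> M \<Longrightarrow> x' \<in> M \<Longrightarrow> F x = F x' \<Longrightarrow> x = x'"
    and x: "x \<in> M" and Fx: "F x = y" and y: "y \<in> M"
  shows "op_inv_on M F y = x"
proof -
  have "(THE x. x \<in> M \<and> F x = y) = x"
    by (rule the_equality) (use inj x Fx in auto)
  thus ?thesis unfolding op_inv_on_def using y by simp
qed

lemma neumann_series:
  assumes M: "lin_subspace M" "series_closed M" and B: "bounded_op M M B"
    and Bq: "\<And>x. x \<in> M \<Longrightarrow> l2norm (B x) \<le> q * l2norm x" and q: "0 \<le> q" "q < 1"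
    and y: "y \<in> M"
  shows "vsuminf (\<lambda>n. (B ^^ n) y) \<in> M" "vsuminf (\<lambda>n. (B ^^ n) y) - B (vsuminf (\<lambda>n. (B ^^ n) y)) = y"
proof -
  define v where "v = (\<lambda>n. (B ^^ n) y)"
  have vM: "v n \<in> M" for n unfolding v_def by (rule funpow_maps[OF B y])
  have vl: "v n \<in> l2" for n using vM M(1) lin_subspace_in_l2 by blast
  have yl: "y \<in> l2" using y M(1) lin_subspace_in_l2 by blast
  have s: "summable (\<lambda>n. l2norm (v n))"
  proof (rule summable_comparison_test'[where g="\<lambda>n. q ^ n * l2norm y"])
    show "summable (\<lambda>n. q ^ n * l2norm y)" using q by (intro summable_mult2 summable_geometric) auto
    fix n show "norm (l2norm (v n)) \<le> q ^ n * l2norm y"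
      using l2norm_funpow_le_power[OF B Bq q(1) y, of n] vl[of n] unfolding v_def by simp
  qed
  show sM: "vsuminf (\<lambda>n. (B ^^ n) y) \<in> M" using M(2) vM s unfolding series_closed_def v_def by simp
  have Bs: "B (vsuminf v) = vsuminf (\<lambda>n. B (v n))" by (rule bounded_op_vsuminf[OF B M M(1) vM s])
  have cs: "summable (\<lambda>n. v n k)" for k
    by (rule summable_norm_cancel[OF summable_coord[OF vl s]])
  have "vsuminf v - B (vsuminf v) = y"
  proof (rule ext)
    fix k
    have "(vsuminf v - B (vsuminf v)) k = vsuminf v k - vsuminf (\<lambda>n. B (v n)) k" using Bs by simp
    also have "\<dots> = (\<Sum>n. v n k) - (\<Sum>n. v (Suc n) k)"
      unfolding vsuminf_def v_def by simp
    also have "\<dots> = v 0 k" using suminf_split_head[OF cs[of k]] by simp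
    finally show "(vsuminf v - B (vsuminf v)) k = y k" unfolding v_def by simp
  qed
  thus "vsuminf (\<lambda>n. (B ^^ n) y) - B (vsuminf (\<lambda>n. (B ^^ n) y)) = y" unfolding v_def .
qed

lemma pos_sqrt_vanishes:
  assumes S: "is_pos_sqrt M A S" and k: "k \<in> M" and Ak: "A k = 0" and M: "lin_subspace M"
  shows "S k = 0"
proof -
  have Sb: "bounded_op M M S" and Ssa: "\<And>x y. x \<in> M \<Longrightarrow> y \<in> M \<Longrightarrow> cinner (S x) y = cinner x (S y)"
    and Ssq: "\<And>x. x \<in> M \<Longrightarrow> S (S x) = A x"
    using S unfolding is_pos_sqrt_def by auto
  have Sk: "S k \<in> M" using bounded_op_maps[OF Sb k] .
  have "cinner (S k) (S k) = cinner (S (S k)) k" using Ssa[OF Sk k] by simp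
  also have "\<dots> = 0" using Ssq[OF k] Ak by simp
  finally show ?thesis using cinner_self_eq_zero Sk M lin_subspace_in_l2 by blast
qed

lemma is_pos_sqrt_restrict:
  assumes S: "is_pos_sqrt M A S" and N: "lin_subspace N" "N \<subseteq> M" and SN: "\<And>x. x \<in> N \<Longrightarrow> S x \<in> N"
    and A': "\<And>x. x \<in> N \<Longrightarrow> A' x = A x"
  shows "is_pos_sqrt N A' (\<lambda>x. if x \<in> N then S x else 0)"
proof -
  have "bounded_op N N (\<lambda>x. if x \<in> N then S x else 0)"
    by (rule bounded_op_cong[OF bounded_op_restrict[OF is_pos_sqrtD(1)[OF S] N(2) SN] N(1)]) simp_all
  moreover have "Im (cinner (S x) x) = 0 \<and> 0 \<le> Re (cinner (S x) x)" "S (S x) = A' x" if "x \<in> N" for x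
    using S SN[OF that] A'[OF that] N(2) that unfolding is_pos_sqrt_def by auto
  moreover have "cinner (S x) y = cinner x (S y)" if "x \<in> N" "y \<in> N" for x y
    using is_pos_sqrtD(2)[OF S] N(2) that by blast
  ultimately show ?thesis unfolding is_pos_sqrt_def by (auto simp: SN)
qed

lemma pos_sqrt_inj:
  assumes M: "lin_subspace M" and S: "is_pos_sqrt M A S"
    and A: "\<And>x. x \<in> M \<Longrightarrow> A x = x - B x"
    and Bq: "\<And>x. x \<in> M \<Longrightarrow> l2norm (B x) \<le> q * l2norm x" and q: "q < 1"
    and x: "x \<in> M" and x': "x' \<in> M" and eq: "S x = S x'"
  shows "x = x'"
proof -
  note Sb = is_pos_sqrtD(1)[OF S]
  define z where "z = x - x'"
  have zM: "z \<in> M" unfolding z_def using lin_subspace_diff[OF M x x'] .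
  have "S z = 0" unfolding z_def using bounded_op_diff[OF Sb M x x'] eq by simp
  hence "A z = 0" using is_pos_sqrtD(3)[OF S zM] bounded_op_zero[OF Sb M] by simp
  hence "B z = z" using A[OF zM] by simp
  hence "z = 0" using l2norm_le_mult_imp_zero[OF lin_subspace_in_l2[OF M zM] q] Bq[OF zM] by simp
  thus ?thesis unfolding z_def by simp
qed

lemma op_inv_on_pos_sqrt:
  assumes M: "lin_subspace M" "series_closed M" and S: "is_pos_sqrt M A S"
    and A: "\<And>x. x \<in> M \<Longrightarrow> A x = x - B x" and B: "bounded_op M M B"
    and Bq: "\<And>x. x \<in> M \<Longrightarrow> l2norm (B x) \<le> q * l2norm x" and q: "0 \<le> q" "q < 1"
    and y: "y \<in> M"
  shows "op_inv_on M S y \<in> M" "S (op_inv_on M S y) = y"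
proof -
  define N where "N = vsuminf (\<lambda>n. (B ^^ n) y)"
  have NM: "N \<in> M" and NB: "N - B N = y" unfolding N_def using neumann_series[OF M B Bq q y] by auto
  define x where "x = S N"
  have xM: "x \<in> M" unfolding x_def using bounded_op_maps[OF is_pos_sqrtD(1)[OF S] NM] .
  have Sx: "S x = y" unfolding x_def using is_pos_sqrtD(3)[OF S NM] A[OF NM] NB by simp
  have "op_inv_on M S y = x"
    by (rule op_inv_on_eqI[where F=S, OF pos_sqrt_inj[OF M(1) S A Bq q(2)] xM Sx y])
  thus "op_inv_on M S y \<in> M" "S (op_inv_on M S y) = y" using xM Sx by simp_all
qed

section \<open>The contraction \<open>T\<close> and its defect operators\<close>

locale contraction_strict_on_Kperp =
  fixes T :: "vec \<Rightarrow> vec"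
  assumes bounded_op_T: "bounded_op l2 l2 T"
    and T_contraction: "\<forall>x\<in>l2. l2norm (T x) \<le> l2norm x"
    and op_norm_Kperp: "op_norm_on (orth (Kset T)) T < 1"
begin

abbreviation "Ts \<equiv> adj T"
abbreviation "K \<equiv> Kset T"
abbreviation "Ks \<equiv> Kstar T"
abbreviation "Kperp \<equiv> orth (Kset T)"
abbreviation "Ksperp \<equiv> orth (Kstar T)"

lemma l2norm_T_le: "x \<in> l2 \<Longrightarrow> l2norm (T x) \<le> l2norm x"
  using T_contraction by blast

lemma bounded_op_Ts: "bounded_op l2 l2 Ts" and l2norm_Ts_le: "y \<in> l2 \<Longrightarrow> l2norm (Ts y) \<le> l2norm y"
  using bounded_op_adj[OF bounded_op_T l2norm_T_le] l2norm_adj_le[OF bounded_op_T l2norm_T_le] by auto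

lemma T_l2: "x \<in> l2 \<Longrightarrow> T x \<in> l2"
  using bounded_op_maps[OF bounded_op_T] .

lemma Ts_l2: "x \<in> l2 \<Longrightarrow> Ts x \<in> l2"
  using bounded_op_maps[OF bounded_op_Ts] .

lemma cinner_T_left: "x \<in> l2 \<Longrightarrow> y \<in> l2 \<Longrightarrow> cinner (T x) y = cinner x (Ts y)"
  using adj_props(2)[OF bounded_op_T] by blast

lemma cinner_Ts_left: "x \<in> l2 \<Longrightarrow> y \<in> l2 \<Longrightarrow> cinner (Ts y) x = cinner y (T x)"
  by (metis cinner_T_left cinner_commute T_l2 Ts_l2)

lemma K_l2: "K \<subseteq> l2" and Ks_l2: "Ks \<subseteq> l2"
  unfolding Kset_def Kstar_def by auto

lemma K_iff: "k \<in> K \<longleftrightarrow> k \<in> l2 \<and> Ts (T k) = k"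
  unfolding Kset_def by auto

lemma Ks_iff: "k \<in> Ks \<longleftrightarrow> k \<in> l2 \<and> T (Ts k) = k"
  unfolding Kstar_def by auto

lemma bounded_op_TsT: "bounded_op l2 l2 (\<lambda>x. Ts (T x))"
  by (rule bounded_op_comp[OF bounded_op_T bounded_op_Ts lin_subspace_l2])

lemma bounded_op_TTs: "bounded_op l2 l2 (\<lambda>x. T (Ts x))"
  by (rule bounded_op_comp[OF bounded_op_Ts bounded_op_T lin_subspace_l2])

lemma lin_subspace_K: "lin_subspace K"
  unfolding lin_subspace_def
  by (auto simp: K_iff bounded_op_add[OF bounded_op_TsT] bounded_op_smul[OF bounded_op_TsT]
      bounded_op_zero[OF bounded_op_TsT lin_subspace_l2])

lemma lin_subspace_Kperp: "lin_subspace Kperp" and series_closed_Kperp: "series_closed Kperp"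
  and lin_subspace_Ksperp: "lin_subspace Ksperp" and series_closed_Ksperp: "series_closed Ksperp"
  using lin_subspace_orth[OF K_l2] series_closed_orth[OF K_l2]
    lin_subspace_orth[OF Ks_l2] series_closed_orth[OF Ks_l2] by auto

lemma Kperp_l2: "x \<in> Kperp \<Longrightarrow> x \<in> l2" and Ksperp_l2: "x \<in> Ksperp \<Longrightarrow> x \<in> l2"
  using orth_l2 by auto

lemma T_K: "k \<in> K \<Longrightarrow> T k \<in> Ks"
  unfolding K_iff Ks_iff using T_l2 by simp

lemma Ts_Ks: "k \<in> Ks \<Longrightarrow> Ts k \<in> K"
  unfolding K_iff Ks_iff using Ts_l2 by simp

lemma T_Kperp: "x \<in> Kperp \<Longrightarrow> T x \<in> Ksperp"
proof (rule orthI)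
  assume x: "x \<in> Kperp"
  show "T x \<in> l2" using T_l2[OF Kperp_l2[OF x]] .
  fix k assume k: "k \<in> Ks"
  have "cinner k (T x) = cinner (Ts k) x" using cinner_Ts_left[OF Kperp_l2[OF x]] k Ks_l2 by auto
  also have "\<dots> = 0" using orthD[OF x Ts_Ks[OF k]] .
  finally show "cinner k (T x) = 0" .
qed

lemma Ts_Ksperp: "y \<in> Ksperp \<Longrightarrow> Ts y \<in> Kperp"
proof (rule orthI)
  assume y: "y \<in> Ksperp"
  show "Ts y \<in> l2" using Ts_l2[OF Ksperp_l2[OF y]] .
  fix k assume k: "k \<in> K"
  have "cinner k (Ts y) = cinner (T k) y" using cinner_T_left[OF _ Ksperp_l2[OF y]] k K_l2 by auto
  also have "\<dots> = 0" using orthD[OF y T_K[OF k]] .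
  finally show "cinner k (Ts y) = 0" .
qed

lemma t_star_eq: "y \<in> Ksperp \<Longrightarrow> t_star T y = Ts y"
  unfolding t_star_def
  by (rule adj_on_eqI[OF lin_subspace_Kperp _ Ts_Ksperp]) (auto simp: cinner_T_left Kperp_l2 Ksperp_l2)

lemma T_Kperp_strict:
  obtains c where "0 \<le> c" "c < 1" "\<And>x. x \<in> Kperp \<Longrightarrow> l2norm (T x) \<le> c * l2norm x"
proof -
  define X where "X = {l2norm (T x) | x. x \<in> Kperp \<and> l2norm x \<le> 1}"
  define c where "c = op_norm_on Kperp T"
  have cX: "c = Sup X" unfolding c_def X_def op_norm_on_def ..
  have bdd: "bdd_above X" unfolding X_def
    by (rule bdd_aboveI[where M=1]) (use l2norm_T_le Kperp_l2 order_trans in blast)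
  have ne: "0 \<in> X" unfolding X_def
    using lin_subspace_zero[OF lin_subspace_Kperp] bounded_op_zero[OF bounded_op_T lin_subspace_l2]
    by (auto intro!: exI[of _ 0])
  have c0: "0 \<le> c" unfolding cX using cSup_upper[OF ne bdd] .
  have bnd: "l2norm (T x) \<le> c * l2norm x" if x: "x \<in> Kperp" for x
  proof (cases "x = 0")
    case True then show ?thesis using bounded_op_zero[OF bounded_op_T lin_subspace_l2] by simp
  next
    case False
    have xl: "x \<in> l2" using Kperp_l2[OF x] .
    have np: "0 < l2norm x" using False l2norm_eq_zero_iff[OF xl] l2norm_nonneg[OF xl] by linarith
    define x' where "x' = smul (complex_of_real (1 / l2norm x)) x"
    have x'K: "x' \<in> Kperp" unfolding x'_def using lin_subspace_smul[OF lin_subspace_Kperp x] .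
    have nx': "l2norm x' = 1" unfolding x'_def using l2norm_smul[OF xl] np by (simp add: norm_divide)
    have Tx': "l2norm (T x') = l2norm (T x) / l2norm x"
      unfolding x'_def using bounded_op_smul[OF bounded_op_T xl] l2norm_smul[OF T_l2[OF xl]] np
      by (simp add: norm_divide)
    have "l2norm (T x') \<in> X" unfolding X_def using x'K nx' by auto
    hence "l2norm (T x) / l2norm x \<le> c" unfolding cX Tx'[symmetric] using cSup_upper[OF _ bdd] by blast
    thus ?thesis using np by (simp add: field_simps)
  qed
  show ?thesis using that[OF c0 _ bnd] op_norm_Kperp unfolding c_def by blast
qed

lemma selfadjoint_contraction_TsT: "selfadjoint_contraction l2 (\<lambda>x. Ts (T x))"
proof
  show "lin_subspace l2" "series_closed l2" by (rule lin_subspace_l2, rule series_closed_l2)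
  show "bounded_op l2 l2 (\<lambda>x. Ts (T x))" by (rule bounded_op_TsT)
  fix x assume x: "x \<in> l2"
  show "l2norm (Ts (T x)) \<le> l2norm x" using l2norm_Ts_le[OF T_l2[OF x]] l2norm_T_le[OF x] by linarith
  fix y assume y: "y \<in> l2"
  show "cinner (Ts (T x)) y = cinner x (Ts (T y))"
    using cinner_Ts_left[OF y T_l2[OF x]] cinner_T_left[OF x T_l2[OF y]] by simp
qed

lemma selfadjoint_contraction_TTs: "selfadjoint_contraction l2 (\<lambda>x. T (Ts x))"
proof
  show "lin_subspace l2" "series_closed l2" by (rule lin_subspace_l2, rule series_closed_l2)
  show "bounded_op l2 l2 (\<lambda>x. T (Ts x))" by (rule bounded_op_TTs)
  fix x assume x: "x \<in> l2"
  show "l2norm (T (Ts x)) \<le> l2norm x" using l2norm_T_le[OF Ts_l2[OF x]] l2norm_Ts_le[OF x] by linarith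
  fix y assume y: "y \<in> l2"
  show "cinner (T (Ts x)) y = cinner x (T (Ts y))"
    using cinner_T_left[OF Ts_l2[OF x] y] cinner_Ts_left[OF Ts_l2[OF y] x] by simp
qed

lemma bounded_op_Ts_Ksperp: "bounded_op Ksperp Kperp Ts"
  by (rule bounded_op_restrict[OF bounded_op_Ts]) (auto simp: Ksperp_l2 Ts_Ksperp)

lemma selfadjoint_contraction_TsT_Kperp: "selfadjoint_contraction Kperp (\<lambda>x. Ts (T x))"
proof
  show "lin_subspace Kperp" "series_closed Kperp" by (rule lin_subspace_Kperp, rule series_closed_Kperp)
  show "bounded_op Kperp Kperp (\<lambda>x. Ts (T x))"
    by (rule bounded_op_restrict[OF bounded_op_TsT]) (auto simp: Kperp_l2 Ts_Ksperp T_Kperp)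
  fix x y assume "x \<in> Kperp" "y \<in> Kperp"
  then show "l2norm (Ts (T x)) \<le> l2norm x" "cinner (Ts (T x)) y = cinner x (Ts (T y))"
    using selfadjoint_contraction.B_contraction[OF selfadjoint_contraction_TsT]
      selfadjoint_contraction.B_selfadjoint[OF selfadjoint_contraction_TsT] Kperp_l2 by auto
qed

lemma selfadjoint_contraction_TTs_Ksperp: "selfadjoint_contraction Ksperp (\<lambda>x. T (Ts x))"
proof
  show "lin_subspace Ksperp" "series_closed Ksperp" by (rule lin_subspace_Ksperp, rule series_closed_Ksperp)
  show "bounded_op Ksperp Ksperp (\<lambda>x. T (Ts x))"
    by (rule bounded_op_restrict[OF bounded_op_TTs]) (auto simp: Ksperp_l2 Ts_Ksperp T_Kperp)
  fix x y assume "x \<in> Ksperp" "y \<in> Ksperp"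
  then show "l2norm (T (Ts x)) \<le> l2norm x" "cinner (T (Ts x)) y = cinner x (T (Ts y))"
    using selfadjoint_contraction.B_contraction[OF selfadjoint_contraction_TTs]
      selfadjoint_contraction.B_selfadjoint[OF selfadjoint_contraction_TTs] Ksperp_l2 by auto
qed

abbreviation "D \<equiv> defect T"
abbreviation "Ds \<equiv> defect_star T"
abbreviation "S1 \<equiv> op_sqrt_on Kperp (\<lambda>x. x - t_star T (T x))"
abbreviation "S2 \<equiv> op_sqrt_on Ksperp (\<lambda>y. y - T (t_star T y))"

lemma one_minus_t_star_t_eq: "x \<in> Kperp \<Longrightarrow> x - t_star T (T x) = x - Ts (T x)"
  using t_star_eq[OF T_Kperp] by simp

lemma one_minus_t_t_star_eq: "y \<in> Ksperp \<Longrightarrow> y - T (t_star T y) = y - T (Ts y)"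
  using t_star_eq by simp

lemma is_pos_sqrt_D: "is_pos_sqrt l2 (\<lambda>x. x - Ts (T x)) D"
  unfolding defect_def by (rule selfadjoint_contraction.is_pos_sqrt_op_sqrt_on[OF selfadjoint_contraction_TsT]) simp

lemma is_pos_sqrt_Ds: "is_pos_sqrt l2 (\<lambda>x. x - T (Ts x)) Ds"
  unfolding defect_star_def by (rule selfadjoint_contraction.is_pos_sqrt_op_sqrt_on[OF selfadjoint_contraction_TTs]) simp

lemma bounded_op_D: "bounded_op l2 l2 D" and bounded_op_Ds: "bounded_op l2 l2 Ds"
  using is_pos_sqrtD(1)[OF is_pos_sqrt_D] is_pos_sqrtD(1)[OF is_pos_sqrt_Ds] .

lemma is_pos_sqrt_S1: "is_pos_sqrt Kperp (\<lambda>x. x - t_star T (T x)) S1"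
  by (rule selfadjoint_contraction.is_pos_sqrt_op_sqrt_on[OF selfadjoint_contraction_TsT_Kperp]) (rule one_minus_t_star_t_eq)

lemma is_pos_sqrt_S2: "is_pos_sqrt Ksperp (\<lambda>y. y - T (t_star T y)) S2"
  by (rule selfadjoint_contraction.is_pos_sqrt_op_sqrt_on[OF selfadjoint_contraction_TTs_Ksperp]) (rule one_minus_t_t_star_eq)

lemma S1_eq_series: "x \<in> Kperp \<Longrightarrow> S1 x = op_series (selfadjoint_contraction.negB (\<lambda>x. Ts (T x))) sqrt_coeff x"
  using selfadjoint_contraction.op_sqrt_on_eq_sqrt_series[OF selfadjoint_contraction_TsT_Kperp one_minus_t_star_t_eq]
    selfadjoint_contraction.sqrt_series_def[OF selfadjoint_contraction_TsT_Kperp] by simp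

lemma S2_eq_series: "y \<in> Ksperp \<Longrightarrow> S2 y = op_series (selfadjoint_contraction.negB (\<lambda>x. T (Ts x))) sqrt_coeff y"
  using selfadjoint_contraction.op_sqrt_on_eq_sqrt_series[OF selfadjoint_contraction_TTs_Ksperp one_minus_t_t_star_eq]
    selfadjoint_contraction.sqrt_series_def[OF selfadjoint_contraction_TTs_Ksperp] by simp

lemma D_eq_0_on_K: "k \<in> K \<Longrightarrow> D k = 0"
  by (rule pos_sqrt_vanishes[OF is_pos_sqrt_D _ _ lin_subspace_l2]) (auto simp: K_iff)

lemma Ds_eq_0_on_Ks: "k \<in> Ks \<Longrightarrow> Ds k = 0"
  by (rule pos_sqrt_vanishes[OF is_pos_sqrt_Ds _ _ lin_subspace_l2]) (auto simp: Ks_iff)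

lemma D_in_Kperp: "x \<in> l2 \<Longrightarrow> D x \<in> Kperp"
proof (rule orthI)
  assume x: "x \<in> l2"
  show "D x \<in> l2" using bounded_op_maps[OF bounded_op_D x] .
  fix k assume k: "k \<in> K"
  have "cinner k (D x) = cinner (D k) x" using is_pos_sqrtD(2)[OF is_pos_sqrt_D, of k x] k K_l2 x by auto
  thus "cinner k (D x) = 0" using D_eq_0_on_K[OF k] by simp
qed

lemma Ds_in_Ksperp: "x \<in> l2 \<Longrightarrow> Ds x \<in> Ksperp"
proof (rule orthI)
  assume x: "x \<in> l2"
  show "Ds x \<in> l2" using bounded_op_maps[OF bounded_op_Ds x] .
  fix k assume k: "k \<in> Ks"
  have "cinner k (Ds x) = cinner (Ds k) x" using is_pos_sqrtD(2)[OF is_pos_sqrt_Ds, of k x] k Ks_l2 x by auto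
  thus "cinner k (Ds x) = 0" using Ds_eq_0_on_Ks[OF k] by simp
qed

lemma D_eq_S1: "x \<in> Kperp \<Longrightarrow> D x = S1 x"
proof -
  have "is_pos_sqrt Kperp (\<lambda>x. x - t_star T (T x)) (\<lambda>x. if x \<in> Kperp then D x else 0)"
    by (rule is_pos_sqrt_restrict[OF is_pos_sqrt_D lin_subspace_Kperp]) (auto simp: Kperp_l2 D_in_Kperp one_minus_t_star_t_eq)
  hence "S1 = (\<lambda>x. if x \<in> Kperp then D x else 0)"
    by (rule selfadjoint_contraction.op_sqrt_on_unique[OF selfadjoint_contraction_TsT_Kperp]) (rule one_minus_t_star_t_eq)
  thus "x \<in> Kperp \<Longrightarrow> D x = S1 x" by simp
qed

lemma Ds_eq_S2: "y \<in> Ksperp \<Longrightarrow> Ds y = S2 y"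
proof -
  have "is_pos_sqrt Ksperp (\<lambda>y. y - T (t_star T y)) (\<lambda>y. if y \<in> Ksperp then Ds y else 0)"
    by (rule is_pos_sqrt_restrict[OF is_pos_sqrt_Ds lin_subspace_Ksperp]) (auto simp: Ksperp_l2 Ds_in_Ksperp one_minus_t_t_star_eq)
  hence "S2 = (\<lambda>y. if y \<in> Ksperp then Ds y else 0)"
    by (rule selfadjoint_contraction.op_sqrt_on_unique[OF selfadjoint_contraction_TTs_Ksperp]) (rule one_minus_t_t_star_eq)
  thus "y \<in> Ksperp \<Longrightarrow> Ds y = S2 y" by simp
qed

lemma S1_Ts_eq_Ts_S2: "y \<in> Ksperp \<Longrightarrow> S1 (Ts y) = Ts (S2 y)"
proof -
  assume y: "y \<in> Ksperp"
  have "Ts (op_series (selfadjoint_contraction.negB (\<lambda>x. T (Ts x))) sqrt_coeff y)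
      = op_series (selfadjoint_contraction.negB (\<lambda>x. Ts (T x))) sqrt_coeff (Ts y)"
  proof (rule op_series_commute[OF bounded_op_Ts_Ksperp lin_subspace_Ksperp series_closed_Ksperp
        lin_subspace_Kperp selfadjoint_contraction.bounded_op_negB[OF selfadjoint_contraction_TTs_Ksperp] _ y])
    fix z assume z: "z \<in> Ksperp"
    show "Ts (selfadjoint_contraction.negB (\<lambda>x. T (Ts x)) z) = selfadjoint_contraction.negB (\<lambda>x. Ts (T x)) (Ts z)"
      unfolding selfadjoint_contraction.negB_def[OF selfadjoint_contraction_TTs_Ksperp]
        selfadjoint_contraction.negB_def[OF selfadjoint_contraction_TsT_Kperp]
      using bounded_op_uminus[OF bounded_op_Ts T_l2[OF Ts_l2[OF Ksperp_l2[OF z]]]] by simp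
  next
    show "summable (\<lambda>n. l2norm (smul (sqrt_coeff n) ((selfadjoint_contraction.negB (\<lambda>x. T (Ts x)) ^^ n) y)))"
      by (rule contraction_on.summable_series_terms[OF
            selfadjoint_contraction.contraction_on_negB[OF selfadjoint_contraction_TTs_Ksperp] summable_sqrt_coeff y])
  qed
  thus ?thesis using S1_eq_series[OF Ts_Ksperp[OF y]] S2_eq_series[OF y] by simp
qed

lemma TsT_TTs_strict:
  obtains c where "0 \<le> c" "c < 1" "\<And>x. x \<in> Kperp \<Longrightarrow> l2norm (Ts (T x)) \<le> c * l2norm x"
    "\<And>y. y \<in> Ksperp \<Longrightarrow> l2norm (T (Ts y)) \<le> c * l2norm y"
proof -
  obtain c where c: "0 \<le> c" "c < 1" "\<And>x. x \<in> Kperp \<Longrightarrow> l2norm (T x) \<le> c * l2norm x"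
    by (rule T_Kperp_strict) blast
  have "l2norm (Ts (T x)) \<le> c * l2norm x" if x: "x \<in> Kperp" for x
    using l2norm_Ts_le[OF T_l2[OF Kperp_l2[OF x]]] c(3)[OF x] by linarith
  moreover have "l2norm (T (Ts y)) \<le> c * l2norm y" if y: "y \<in> Ksperp" for y
  proof -
    have "l2norm (T (Ts y)) \<le> c * l2norm (Ts y)" using c(3)[OF Ts_Ksperp[OF y]] .
    also have "\<dots> \<le> c * l2norm y" using l2norm_Ts_le[OF Ksperp_l2[OF y]] c(1) by (rule mult_left_mono)
    finally show ?thesis .
  qed
  ultimately show ?thesis using that[OF c(1,2)] by blast
qed

lemma R1_Kperp: "y \<in> Kperp \<Longrightarrow> R1 T y \<in> Kperp" and S1_R1: "y \<in> Kperp \<Longrightarrow> S1 (R1 T y) = y"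
proof -
  obtain c where c: "0 \<le> c" "c < 1" "\<And>x. x \<in> Kperp \<Longrightarrow> l2norm (Ts (T x)) \<le> c * l2norm x"
    by (rule TsT_TTs_strict) blast
  note inv = op_inv_on_pos_sqrt[OF lin_subspace_Kperp series_closed_Kperp is_pos_sqrt_S1 one_minus_t_star_t_eq
      selfadjoint_contraction.B[OF selfadjoint_contraction_TsT_Kperp] c(3) c(1,2)]
  show "y \<in> Kperp \<Longrightarrow> R1 T y \<in> Kperp" "y \<in> Kperp \<Longrightarrow> S1 (R1 T y) = y"
    unfolding R1_def using inv by auto
qed

lemma R2_Ksperp: "y \<in> Ksperp \<Longrightarrow> R2 T y \<in> Ksperp" and S2_R2: "y \<in> Ksperp \<Longrightarrow> S2 (R2 T y) = y"
proof -
  obtain c where c: "0 \<le> c" "c < 1" "\<And>y. y \<in> Ksperp \<Longrightarrow> l2norm (T (Ts y)) \<le> c * l2norm y"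
    by (rule TsT_TTs_strict) blast
  note inv = op_inv_on_pos_sqrt[OF lin_subspace_Ksperp series_closed_Ksperp is_pos_sqrt_S2 one_minus_t_t_star_eq
      selfadjoint_contraction.B[OF selfadjoint_contraction_TTs_Ksperp] c(3) c(1,2)]
  show "y \<in> Ksperp \<Longrightarrow> R2 T y \<in> Ksperp" "y \<in> Ksperp \<Longrightarrow> S2 (R2 T y) = y"
    unfolding R2_def using inv by auto
qed

section \<open>Boundary values on \<open>N\<^sub>\<lambda>\<close> and the characteristic function\<close>

text \<open>Without a projection theorem, the \<open>K\<^sup>\<bottom>\<close>-component of \<open>x\<close> is obtained as
  \<open>S\<^sub>1\<^sup>-\<^sup>1 D x\<close>: the remainder is annihilated by \<open>D\<close>, hence lies in \<open>K\<close>.\<close>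

lemma K_Kperp_decomposition:
  assumes x: "x \<in> l2"
  shows "R1 T (D x) \<in> Kperp" "x - R1 T (D x) \<in> K"
proof -
  define p where "p = R1 T (D x)"
  have p: "p \<in> Kperp" "S1 p = D x" unfolding p_def using R1_Kperp S1_R1 D_in_Kperp[OF x] by auto
  have x0: "x - p \<in> l2" using x Kperp_l2[OF p(1)] by simp
  have "D (x - p) = 0"
    using bounded_op_diff[OF bounded_op_D lin_subspace_l2 x Kperp_l2[OF p(1)]] D_eq_S1[OF p(1)] p(2) by simp
  hence "x - p - Ts (T (x - p)) = 0"
    using is_pos_sqrtD(3)[OF is_pos_sqrt_D x0] bounded_op_zero[OF bounded_op_D lin_subspace_l2] by simp
  thus "R1 T (D x) \<in> Kperp" "x - R1 T (D x) \<in> K" using p(1) x0 unfolding p_def Kset_def by simp_all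
qed

lemma K_Kperp_decomposition_unique:
  assumes "x0 \<in> K" "x0' \<in> K" "p \<in> Kperp" "p' \<in> Kperp" "x0 + p = x0' + p'"
  shows "p = p'" "x0 = x0'"
proof -
  define z where "z = p - p'"
  have zKp: "z \<in> Kperp" unfolding z_def using lin_subspace_diff[OF lin_subspace_Kperp assms(3,4)] .
  have "z = x0' - x0" unfolding z_def using assms(5) by (simp add: algebra_simps)
  hence zK: "z \<in> K" using lin_subspace_diff[OF lin_subspace_K assms(2,1)] by simp
  have "z = 0" using cinner_self_eq_zero[OF Kperp_l2[OF zKp] orthD[OF zKp zK]] .
  thus "p = p'" unfolding z_def by simp
  thus "x0 = x0'" using assms(5) by simp
qed

lemma Gamma_plus_minus_eq:
  assumes x0: "x0 \<in> K" and p: "p \<in> Kperp" and m: "m \<in> Ksperp"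
  shows "Gamma_plus T (x0 + p, T x0 + m) = p" "Gamma_minus T (x0 + p, T x0 + m) = m"
proof -
  show "Gamma_plus T (x0 + p, T x0 + m) = p"
    unfolding Gamma_plus_def
  proof (rule the_equality)
    show "p \<in> Kperp \<and> (\<exists>x0'\<in>K. \<exists>m'\<in>Ksperp. (x0 + p, T x0 + m) = (x0' + p, T x0' + m'))"
      using x0 p m by blast
    fix p' assume "p' \<in> Kperp \<and> (\<exists>x0'\<in>K. \<exists>m'\<in>Ksperp. (x0 + p, T x0 + m) = (x0' + p', T x0' + m'))"
    then obtain x0' where "p' \<in> Kperp" "x0' \<in> K" "x0 + p = x0' + p'" by auto
    thus "p' = p" using K_Kperp_decomposition_unique(1)[OF x0 _ p] by metis
  qed
  show "Gamma_minus T (x0 + p, T x0 + m) = m"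
    unfolding Gamma_minus_def
  proof (rule the_equality)
    show "m \<in> Ksperp \<and> (\<exists>x0'\<in>K. \<exists>p'\<in>Kperp. (x0 + p, T x0 + m) = (x0' + p', T x0' + m))"
      using x0 p m by blast
    fix m' assume "m' \<in> Ksperp \<and> (\<exists>x0'\<in>K. \<exists>p'\<in>Kperp. (x0 + p, T x0 + m) = (x0' + p', T x0' + m'))"
    then obtain x0' p' where "p' \<in> Kperp" "x0' \<in> K" "x0 + p = x0' + p'" "T x0 + m = T x0' + m'" by auto
    thus "m' = m" using K_Kperp_decomposition_unique(2)[OF x0 _ p] by (metis add_left_cancel)
  qed
qed

lemma s_orth_A_T_cinner:
  assumes "(x, y) \<in> s_orth (A_T T)" and k: "k \<in> K"
  shows "cinner x k = cinner y (T k)"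
proof -
  have "(k, T k) \<in> A_T T" unfolding A_T_def using k by auto
  hence "\<i> * (cinner x k - cinner y (T k)) = 0"
    using assms(1) unfolding s_orth_def krein_form_def by (auto simp: right_diff_distrib)
  thus ?thesis by simp
qed

lemma N_lambda_boundary_values:
  assumes a: "a \<in> N_lambda T l"
  obtains x x0 where "x \<in> l2" "a = (x, smul l x)" "x0 \<in> K"
    "x - x0 \<in> Kperp" "smul l x - T x0 \<in> Ksperp"
    "Gamma_plus T a = x - x0" "Gamma_minus T a = smul l x - T x0"
proof -
  obtain x where x: "x \<in> l2" and ax: "a = (x, smul l x)" and ao: "a \<in> s_orth (A_T T)"
    using a unfolding N_lambda_def by auto
  define p where "p = R1 T (D x)"
  define x0 where "x0 = x - p"
  have p: "p \<in> Kperp" and x0: "x0 \<in> K"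
    unfolding p_def x0_def using K_Kperp_decomposition[OF x] by auto
  have x0l: "x0 \<in> l2" using x0 K_l2 by auto
  have ml: "smul l x - T x0 \<in> l2" using x T_l2[OF x0l] by simp
  have m: "smul l x - T x0 \<in> Ksperp"
  proof (rule orthI[OF ml])
    fix k assume k: "k \<in> Ks"
    have kl: "k \<in> l2" and k': "Ts k \<in> K" and Tk': "T (Ts k) = k" using k Ts_Ks Ks_iff by auto
    have "cinner (smul l x - T x0) k = cinner (smul l x) (T (Ts k)) - cinner (T x0) k"
      using x x0l kl Tk' T_l2 by (simp add: cinner_diff_left)
    also have "\<dots> = cinner x (Ts k) - cinner x0 (Ts k)"
      using s_orth_A_T_cinner[OF ao[unfolded ax] k'] cinner_T_left[OF x0l kl] by simp
    also have "\<dots> = cinner p (Ts k)"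
      using x Kperp_l2[OF p] Ts_l2[OF kl] unfolding x0_def by (simp add: cinner_diff_left)
    also have "\<dots> = 0"
      using orthD[OF p k'] cinner_commute[OF Ts_l2[OF kl] Kperp_l2[OF p]] by simp
    finally show "cinner k (smul l x - T x0) = 0"
      using cinner_commute[OF kl ml] by simp
  qed
  have xp: "x - x0 = p" and a_eq: "a = (x0 + p, T x0 + (smul l x - T x0))"
    unfolding ax x0_def by simp_all
  show ?thesis
    using that[OF x ax x0 _ m] Gamma_plus_minus_eq[OF x0 p m] p unfolding xp a_eq by simp
qed

lemma resolvent_inj:
  assumes l: "cmod l < 1" and y: "y \<in> l2" "y' \<in> l2" and eq: "y - smul l (Ts y) = y' - smul l (Ts y')"
  shows "y = y'"
proof -
  define z where "z = y - y'"
  have z: "z \<in> l2" unfolding z_def using y by simp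
  have "smul l (Ts z) = smul l (Ts y) - smul l (Ts y')"
    unfolding z_def using bounded_op_diff[OF bounded_op_Ts lin_subspace_l2 y] by (simp add: smul_diff)
  also have "\<dots> = z" unfolding z_def using eq by (simp add: algebra_simps)
  finally have "l2norm z = cmod l * l2norm (Ts z)" using l2norm_smul[OF Ts_l2[OF z]] by metis
  also have "\<dots> \<le> cmod l * l2norm z" using l2norm_Ts_le[OF z] by (simp add: mult_left_mono)
  finally show ?thesis using l2norm_le_mult_imp_zero[OF z l] unfolding z_def by simp
qed

lemma char_fun_eqI:
  assumes l: "cmod l < 1" and x: "x \<in> l2" and g: "g \<in> Kperp" and Dg: "D g = x - smul l (Ts x)"
  shows "char_fun T l g = - T g + smul l (Ds x)"
proof -
  have "op_inv_on l2 (\<lambda>y. y - smul l (Ts y)) (D g) = x"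
    by (rule op_inv_on_eqI) (use resolvent_inj[OF l] x Dg Ts_l2 in auto)
  thus ?thesis unfolding char_fun_def using g by simp
qed

lemma D_R1_minus_Ts_R2:
  assumes p: "p \<in> Kperp" and m: "m \<in> Ksperp"
  shows "D (R1 T p - Ts (R2 T m)) = p - Ts m"
proof -
  have r: "R1 T p \<in> Kperp" and u: "R2 T m \<in> Ksperp" using R1_Kperp[OF p] R2_Ksperp[OF m] .
  have "D (R1 T p - Ts (R2 T m)) = S1 (R1 T p - Ts (R2 T m))"
    using D_eq_S1 lin_subspace_diff[OF lin_subspace_Kperp r Ts_Ksperp[OF u]] by blast
  also have "\<dots> = S1 (R1 T p) - S1 (Ts (R2 T m))"
    by (rule bounded_op_diff[OF is_pos_sqrtD(1)[OF is_pos_sqrt_S1] lin_subspace_Kperp r Ts_Ksperp[OF u]])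
  also have "\<dots> = p - Ts m" using S1_R1[OF p] S1_Ts_eq_Ts_S2[OF u] S2_R2[OF m] by simp
  finally show ?thesis .
qed

theorem Weyl_function_eq:
  assumes l: "cmod l < 1" and a: "a \<in> N_lambda T l"
  shows "Gamma'_minus T a = - char_fun T l (Gamma'_plus T a)"
proof -
  obtain x x0 where x: "x \<in> l2" and x0: "x0 \<in> K" and p: "x - x0 \<in> Kperp" and m: "smul l x - T x0 \<in> Ksperp"
    and Gp: "Gamma_plus T a = x - x0" and Gm: "Gamma_minus T a = smul l x - T x0"
    by (rule N_lambda_boundary_values[OF a])
  define r where "r = R1 T (x - x0)"
  define u where "u = R2 T (smul l x - T x0)"
  have x0l: "x0 \<in> l2" using x0 K_l2 by auto
  have r_in: "r \<in> Kperp" unfolding r_def using R1_Kperp[OF p] .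
  have u_in: "u \<in> Ksperp" unfolding u_def using R2_Ksperp[OF m] .
  have g: "Gamma'_plus T a = r - Ts u"
    unfolding Gamma'_plus_def Gp Gm r_def u_def using t_star_eq[OF R2_Ksperp[OF m]] by simp
  have g_in: "r - Ts u \<in> Kperp" using lin_subspace_diff[OF lin_subspace_Kperp r_in Ts_Ksperp[OF u_in]] .
  have "Ts (smul l x - T x0) = smul l (Ts x) - x0"
    using bounded_op_diff[OF bounded_op_Ts lin_subspace_l2 l2_smul[OF x] T_l2[OF x0l]]
      bounded_op_smul[OF bounded_op_Ts x] x0 K_iff by simp
  hence "D (r - Ts u) = x - smul l (Ts x)"
    using D_R1_minus_Ts_R2[OF p m] unfolding r_def u_def by simp
  hence Theta: "char_fun T l (r - Ts u) = - T (r - Ts u) + smul l (Ds x)"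
    by (rule char_fun_eqI[OF l x g_in])
  have "smul l (Ds x) = Ds (smul l x)" using bounded_op_smul[OF bounded_op_Ds x] by simp
  also have "\<dots> = Ds (T x0) + Ds (smul l x - T x0)"
    using bounded_op_add[OF bounded_op_Ds T_l2[OF x0l] Ksperp_l2[OF m]] by simp
  also have "\<dots> = S2 (S2 u)"
    using Ds_eq_0_on_Ks[OF T_K[OF x0]] Ds_eq_S2[OF m] S2_R2[OF m] unfolding u_def by simp
  also have "\<dots> = u - T (Ts u)"
    using is_pos_sqrtD(3)[OF is_pos_sqrt_S2 u_in] one_minus_t_t_star_eq[OF u_in] by simp
  finally have Ds_x: "smul l (Ds x) = u - T (Ts u)" .
  have T_g: "T (r - Ts u) = T r - T (Ts u)"
    by (rule bounded_op_diff[OF bounded_op_T lin_subspace_l2 Kperp_l2[OF r_in] Ts_l2[OF Ksperp_l2[OF u_in]]])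
  show ?thesis
    unfolding Gamma'_minus_def Gp Gm g Theta Ds_x T_g by (simp add: r_def u_def)
qed

end

theorem proposition4p8:
  fixes T :: "vec \<Rightarrow> vec" and l :: complex and a :: "vec \<times> vec"
  assumes "bounded_op l2 l2 T"
    and "\<forall>x\<in>l2. l2norm (T x) \<le> l2norm x"
    and "cnu T"
    and "op_norm_on (orth (Kset T)) T < 1"
    and "cmod l < 1"
    and "a \<in> N_lambda T l"
  shows "Gamma'_minus T a = - char_fun T l (Gamma'_plus T a)"
proof -
  interpret contraction_strict_on_Kperp T using assms(1,2,4) by unfold_locales
  show ?thesis by (rule Weyl_function_eq[OF assms(5,6)])
qed

end
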